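(* Let the revision protocols $\rho^c$ be arbitrary (Lipschitz) and let $\mathcal M_{\mathcal F}\subseteq\mathrm{NE}(\mathcal F)$ be nonempty and closed, with $\mathcal M=\{B_{S\to K}x:x\in\mathcal M_{\mathcal F}\}$. Suppose there is a set $\bar D_x\subseteq D_x$ containing a relative neighborhood of $\mathcal M_{\mathcal F}$ in $D_x$ and a continuously differentiable $V:\bar D_x\to\mathbb R_{\ge0}$ with $\|\nabla V\|$ bounded on $\bar D_x$, $V(x)>0$ on $\bar D_x\setminus\mathcal M_{\mathcal F}$, $V=0$ on $\mathcal M_{\mathcal F}$, and $\nabla V(x)^\top g(x)<0$ on $\bar D_x\setminus\mathcal M_{\mathcal F}$, $\nabla V(x)^\top g(x)=0$ on $\mathcal M_{\mathcal F}$, where $g$ is the reduced vector field (R). Then for every $B>0$ there exist $\epsilon^\star,B_0,T>0$ such that for all $\epsilon\in(0,\epsilon^\star)$, every solution of the evolutionary dynamics (E) with rates $R^c_d=\kappa^c/\epsilon$ satisfies $d_{\mathcal M}(\mu(0))\le B_0\Rightarrow d_{\mathcal M}(\mu(t))\le B$ for all $t\ge T$. If moreover $\bar D_x=D_x$, then for every $B>0$ and every $\mu(0)\in X$ there exist $\epsilon^\star,T>0$ such that for all $\epsilon\in(0,\epsilon^\star)$ the solution of (E) from $\mu(0)$ satisfies $d_{\mathcal M}(\mu(t))\le B$ for all $t\ge T$.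
   Context: Setting. There are $C$ classes of players, $[C]=\{1,\dots,C\}$. For each class $c\in[C]$: $\mathcal S^c$ is a finite state set with $p^c$ elements; for each $s\in\mathcal S^c$, $\mathcal A^c(s)$ is a nonempty finite action set; $\phi^c(\cdot\mid s,a)$ is a probability distribution on $\mathcal S^c$ for each $s\in\mathcal S^c$, $a\in\mathcal A^c(s)$; $\mathcal U^c_D$ is a finite set of $n^c$ deterministic stationary policies, each $u\in\mathcal U^c_D$ assigning to every $s$ a point mass $u(\cdot\mid s)$ on some action of $\mathcal A^c(s)$; $m^c>0$ is the mass of class $c$; $R^c_d>0$ is the state-transition rate. Let $n=\sum_c n^c$. For $u\in\mathcal U^c_D$ put $\phi^{c,u}(s\mid s')=\sum_{a'\in\mathcal A^c(s')}\phi^c(s\mid s',a')u(a'\mid s')$; standing assumption: the Markov chain on $\mathcal S^c$ with kernel $\phi^{c,u}$ has a unique recurrent communicating class, hence a unique stationary distribution $\eta^{c,u}$. The population state is $\mu=(\mu^c)_{c\in[C]}\in X:=\prod_c X^c$, where $X^c=\{\mu^c\in\mathbb R_{\ge0}^{\mathcal S^c\times\mathcal U^c_D}:\sum_{s,u}\mu^c[s,u]=m^c\}$; write $\mu^c[\mathcal S^c,u]:=\sum_{s\in\mathcal S^c}\mu^c[s,u]$ and $\mu^c[\mathcal S^c,\cdot]\in\mathbb R^{n^c}_{\ge0}$ for the vector of these. A payoff map $F=(F^c)_{c\in[C]}$ is given, with $F^c$ continuously differentiable on an open neighborhood of $X$ and valued in $\mathbb R^{\mathcal U^c_D}$ ($F^c_u(\mu)$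 is the payoff of policy $u$ for class $c$). Each class has a revision protocol $\rho^c=(\rho^c_{uv})_{u,v\in\mathcal U^c_D}$, a Lipschitz continuous map $\mathbb R^{n^c}\times\mathbb R^{n^c}_{\ge0}\to\mathbb R^{n^c\times n^c}_{\ge0}$ whose first argument is a payoff vector and second a policy distribution. The evolutionary dynamics (E) are the ODE on $X$: for all $c\in[C]$, $s\in\mathcal S^c$, $u\in\mathcal U^c_D$, $\dot\mu^c[s,u]=f^{c,d}_{s,u}(\mu)+f^{c,r}_{s,u}(\mu)$, where $f^{c,d}_{s,u}(\mu)=R^c_d\sum_{s'\in\mathcal S^c}\sum_{a'\in\mathcal A^c(s')}\phi^c(s\mid s',a')u(a'\mid s')\mu^c[s',u]-R^c_d\mu^c[s,u]$ and $f^{c,r}_{s,u}(\mu)=\sum_{u'\in\mathcal U^c_D}\mu^c[s,u']\rho^c_{u'u}(F^c(\mu),\mu^c[\mathcal S^c,\cdot])-\mu^c[s,u]\sum_{u'\in\mathcal U^c_D}\rho^c_{uu'}(F^c(\mu),\mu^c[\mathcal S^c,\cdot])$. Solutions from $X$ exist, are unique and remain in $X$. A state $\mu\in X$ is a mixed stationary Nash equilibrium (MSNE) if for every $c\in[C]$: (a) for all $u\in\mathcal U^c_D$, $\mu^c[\mathcal S^c,u]>0\Rightarrow F^c_u(\mu)\ge F^c_v(\mu)$ for all $v\in\mathcal U^c_D$; and (b) $f^{c,d}_{s,u}(\mu)=0$ for all $s\in\mathcal S^c,u\in\mathcal U^c_D$. $\mathrm{MSNE}(F,\phi)$ denotes the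 set of MSNE. Two-time-scale setup. Let $B^c_{S\to K}=[e^1\otimes\eta^{c,u_1}\ \cdots\ e^{n^c}\otimes\eta^{c,u_{n^c}}]\in\mathbb R^{p^cn^c\times n^c}$ (coordinates of $\mu^c$ ordered $(s_1,u_1),\dots,(s_{p^c},u_1),\dots,(s_{p^c},u_{n^c})$; $e^i$ the standard basis of $\mathbb R^{n^c}$), and $B_{S\to K}=\mathrm{diag}_c(B^c_{S\to K})$; thus $(B_{S\to K}x)^c[s,u]=x^c_u\eta^{c,u}(s)$. Let $D_x=\prod_c\{x^c\in\mathbb R^{n^c}_{\ge0}:\mathbf 1^\top x^c=m^c\}$. The steady-state game is $\mathcal F(x):=F(B_{S\to K}x)$ (defined on a neighborhood of $D_x$); $\mathrm{NE}(\mathcal F)$ is the set of $x\in D_x$ with $x^c_u>0\Rightarrow\mathcal F^c_u(x)\ge\mathcal F^c_v(x)$ for all $c,u,v$. One has $\mathrm{MSNE}(F,\phi)=\{B_{S\to K}x:x\in\mathrm{NE}(\mathcal F)\}$ and $\mu^c[\mathcal S^c,u]=x^c_u$ for $\mu=B_{S\to K}x$. For a closed $\mathcal M_{\mathcal F}\subseteq D_x$ put $\mathcal M=\{B_{S\to K}x:x\in\mathcal M_{\mathcal F}\}$. The reduced vector field (R) on $D_x$ is $g^c_u(x)=\sum_{u'}x^c_{u'}\rho^c_{u'u}(\mathcal F^c(x),x^c)-x^c_u\sum_{u'}\rho^c_{uu'}(\mathcal F^c(x),x^c)$. Time-scale parametrization: fix constants $\kappa^c\ge1$ with $\min_c\kappa^c=1$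 and set $R^c_d=\kappa^c/\epsilon$ for $\epsilon>0$ (so $\epsilon=1/\min_cR^c_d$). $d_A(y)=\inf_{a\in A}\|y-a\|$. *)

theory Defs
  imports "HOL-Analysis.Analysis"
begin

(* Encoding conventions:
   classes  = finite type 'c;  states of class c = Sset c :: 's set (finite type 's);
   policies of class c = Pset c :: 'u set (finite type 'u);  actions of type 'a.
   A population state mu :: real^'u^'s^'c, entry mu$c$s$u = mu^c[s,u]
   (entries outside Sset c x Pset c are 0 on X).
   phi c s' a s = phi^c(s | s', a);  pol c u s = action chosen by policy u at s. *)

type_synonym ('c,'s,'u) pstate = "real^'u^'s^'c"

definition polprob :: "('c \<Rightarrow> 'u \<Rightarrow> 's \<Rightarrow> 'a) \<Rightarrow> 'c \<Rightarrow> 'u \<Rightarrow> 's \<Rightarrow> 'a \<Rightarrow> real" where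
  "polprob pol c u s a = (if a = pol c u s then 1 else 0)"

definition phiu :: "('c \<Rightarrow> 's \<Rightarrow> 'a set) \<Rightarrow> ('c \<Rightarrow> 's \<Rightarrow> 'a \<Rightarrow> 's \<Rightarrow> real)
    \<Rightarrow> ('c \<Rightarrow> 'u \<Rightarrow> 's \<Rightarrow> 'a) \<Rightarrow> 'c \<Rightarrow> 'u \<Rightarrow> 's \<Rightarrow> 's \<Rightarrow> real" where
  "phiu Act phi pol c u s s' = (\<Sum>a\<in>Act c s'. phi c s' a s * polprob pol c u s' a)"

definition reach :: "('c \<Rightarrow> 's set) \<Rightarrow> ('c \<Rightarrow> 's \<Rightarrow> 'a set) \<Rightarrow> ('c \<Rightarrow> 's \<Rightarrow> 'a \<Rightarrow> 's \<Rightarrow> real)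
    \<Rightarrow> ('c \<Rightarrow> 'u \<Rightarrow> 's \<Rightarrow> 'a) \<Rightarrow> 'c \<Rightarrow> 'u \<Rightarrow> ('s \<times> 's) set" where
  "reach Sset Act phi pol c u =
     ({(s', s). s' \<in> Sset c \<and> s \<in> Sset c \<and> phiu Act phi pol c u s s' > 0})\<^sup>*"

definition recurrent_class :: "('c \<Rightarrow> 's set) \<Rightarrow> ('c \<Rightarrow> 's \<Rightarrow> 'a set) \<Rightarrow> ('c \<Rightarrow> 's \<Rightarrow> 'a \<Rightarrow> 's \<Rightarrow> real)
    \<Rightarrow> ('c \<Rightarrow> 'u \<Rightarrow> 's \<Rightarrow> 'a) \<Rightarrow> 'c \<Rightarrow> 'u \<Rightarrow> 's set \<Rightarrow> bool" where
  "recurrent_class Sset Act phi pol c u K \<longleftrightarrow>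
     K \<noteq> {} \<and> K \<subseteq> Sset c \<and>
     (\<forall>x\<in>K. \<forall>y\<in>K. (x, y) \<in> reach Sset Act phi pol c u) \<and>
     (\<forall>x\<in>K. \<forall>y. (x, y) \<in> reach Sset Act phi pol c u \<longrightarrow> y \<in> K)"

definition stationary :: "('c \<Rightarrow> 's set) \<Rightarrow> ('c \<Rightarrow> 's \<Rightarrow> 'a set) \<Rightarrow> ('c \<Rightarrow> 's \<Rightarrow> 'a \<Rightarrow> 's \<Rightarrow> real)
    \<Rightarrow> ('c \<Rightarrow> 'u \<Rightarrow> 's \<Rightarrow> 'a) \<Rightarrow> 'c \<Rightarrow> 'u \<Rightarrow> ('s \<Rightarrow> real) \<Rightarrow> bool" where
  "stationary Sset Act phi pol c u \<eta> \<longleftrightarrow>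
     (\<forall>s. s \<notin> Sset c \<longrightarrow> \<eta> s = 0) \<and> (\<forall>s\<in>Sset c. \<eta> s \<ge> 0) \<and> (\<Sum>s\<in>Sset c. \<eta> s) = 1 \<and>
     (\<forall>s\<in>Sset c. \<eta> s = (\<Sum>s'\<in>Sset c. phiu Act phi pol c u s s' * \<eta> s'))"

definition eta :: "('c \<Rightarrow> 's set) \<Rightarrow> ('c \<Rightarrow> 's \<Rightarrow> 'a set) \<Rightarrow> ('c \<Rightarrow> 's \<Rightarrow> 'a \<Rightarrow> 's \<Rightarrow> real)
    \<Rightarrow> ('c \<Rightarrow> 'u \<Rightarrow> 's \<Rightarrow> 'a) \<Rightarrow> 'c \<Rightarrow> 'u \<Rightarrow> 's \<Rightarrow> real" where
  "eta Sset Act phi pol c u = (THE \<eta>. stationary Sset Act phi pol c u \<eta>)"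

definition Xset :: "('c::finite \<Rightarrow> 's::finite set) \<Rightarrow> ('c \<Rightarrow> 'u::finite set) \<Rightarrow> ('c \<Rightarrow> real)
    \<Rightarrow> ('c,'s,'u) pstate set" where
  "Xset Sset Pset m = {\<mu>. \<forall>c.
      (\<forall>s u. \<mu>$c$s$u \<ge> 0) \<and> (\<forall>s u. (s \<notin> Sset c \<or> u \<notin> Pset c) \<longrightarrow> \<mu>$c$s$u = 0) \<and>
      (\<Sum>s\<in>Sset c. \<Sum>u\<in>Pset c. \<mu>$c$s$u) = m c}"

definition Dx :: "('c::finite \<Rightarrow> 'u::finite set) \<Rightarrow> ('c \<Rightarrow> real) \<Rightarrow> (real^'u^'c) set" where
  "Dx Pset m = {x. \<forall>c. (\<forall>u. x$c$u \<ge> 0) \<and> (\<forall>u. u \<notin> Pset c \<longrightarrow> x$c$u = 0) \<and>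
      (\<Sum>u\<in>Pset c. x$c$u) = m c}"

definition restrP :: "('c \<Rightarrow> 'u::finite set) \<Rightarrow> 'c \<Rightarrow> real^'u \<Rightarrow> real^'u" where
  "restrP Pset c v = (\<chi> u. if u \<in> Pset c then v$u else 0)"

definition aggP :: "('c::finite \<Rightarrow> 's::finite set) \<Rightarrow> ('c \<Rightarrow> 'u::finite set) \<Rightarrow> ('c,'s,'u) pstate
    \<Rightarrow> 'c \<Rightarrow> real^'u" where
  "aggP Sset Pset \<mu> c = (\<chi> u. if u \<in> Pset c then (\<Sum>s\<in>Sset c. \<mu>$c$s$u) else 0)"

definition BSK :: "('c::finite \<Rightarrow> 's::finite set) \<Rightarrow> ('c \<Rightarrow> 'u::finite set) \<Rightarrow> ('c \<Rightarrow> 'u \<Rightarrow> 's \<Rightarrow> real)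
    \<Rightarrow> real^'u^'c \<Rightarrow> ('c,'s,'u) pstate" where
  "BSK Sset Pset et x = (\<chi> c s u. if s \<in> Sset c \<and> u \<in> Pset c then x$c$u * et c u s else 0)"

definition revflow :: "('c::finite \<Rightarrow> 'u::finite set) \<Rightarrow> ('c \<Rightarrow> real^'u \<Rightarrow> real^'u \<Rightarrow> 'u \<Rightarrow> 'u \<Rightarrow> real)
    \<Rightarrow> 'c \<Rightarrow> real^'u \<Rightarrow> real^'u \<Rightarrow> ('u \<Rightarrow> real) \<Rightarrow> 'u \<Rightarrow> real" where
  "revflow Pset rho c p y a u =
     (\<Sum>u'\<in>Pset c. a u' * rho c (restrP Pset c p) (restrP Pset c y) u' u)
     - a u * (\<Sum>u'\<in>Pset c. rho c (restrP Pset c p) (restrP Pset c y) u u')"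

definition Efield :: "('c::finite \<Rightarrow> 's::finite set) \<Rightarrow> ('c \<Rightarrow> 'u::finite set) \<Rightarrow> ('c \<Rightarrow> 's \<Rightarrow> 'a set)
    \<Rightarrow> ('c \<Rightarrow> 's \<Rightarrow> 'a \<Rightarrow> 's \<Rightarrow> real) \<Rightarrow> ('c \<Rightarrow> 'u \<Rightarrow> 's \<Rightarrow> 'a)
    \<Rightarrow> ('c \<Rightarrow> real^'u \<Rightarrow> real^'u \<Rightarrow> 'u \<Rightarrow> 'u \<Rightarrow> real) \<Rightarrow> (('c,'s,'u) pstate \<Rightarrow> real^'u^'c)
    \<Rightarrow> ('c \<Rightarrow> real) \<Rightarrow> real \<Rightarrow> ('c,'s,'u) pstate \<Rightarrow> ('c,'s,'u) pstate" where
  "Efield Sset Pset Act phi pol rho F kappa \<epsilon> \<mu> =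
     (\<chi> c s u. if s \<in> Sset c \<and> u \<in> Pset c then
         (kappa c / \<epsilon>) * (\<Sum>s'\<in>Sset c. \<Sum>a'\<in>Act c s'. phi c s' a' s * polprob pol c u s' a' * \<mu>$c$s'$u)
         - (kappa c / \<epsilon>) * \<mu>$c$s$u
         + revflow Pset rho c (F \<mu> $ c) (aggP Sset Pset \<mu> c) (\<lambda>u'. \<mu>$c$s$u') u
       else 0)"

definition gred :: "('c::finite \<Rightarrow> 'u::finite set) \<Rightarrow> ('c \<Rightarrow> real^'u \<Rightarrow> real^'u \<Rightarrow> 'u \<Rightarrow> 'u \<Rightarrow> real)
    \<Rightarrow> (real^'u^'c \<Rightarrow> real^'u^'c) \<Rightarrow> real^'u^'c \<Rightarrow> real^'u^'c" where
  "gred Pset rho FF x =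
     (\<chi> c u. if u \<in> Pset c then revflow Pset rho c (FF x $ c) (x$c) (\<lambda>u'. x$c$u') u else 0)"

definition NEset :: "('c::finite \<Rightarrow> 'u::finite set) \<Rightarrow> ('c \<Rightarrow> real) \<Rightarrow> (real^'u^'c \<Rightarrow> real^'u^'c)
    \<Rightarrow> (real^'u^'c) set" where
  "NEset Pset m FF = {x \<in> Dx Pset m. \<forall>c. \<forall>u\<in>Pset c. \<forall>v\<in>Pset c.
      x$c$u > 0 \<longrightarrow> FF x $ c $ u \<ge> FF x $ c $ v}"

definition is_solution :: "('c::finite \<Rightarrow> 's::finite set) \<Rightarrow> ('c \<Rightarrow> 'u::finite set) \<Rightarrow> ('c \<Rightarrow> real)
    \<Rightarrow> ('c \<Rightarrow> 's \<Rightarrow> 'a set)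
    \<Rightarrow> ('c \<Rightarrow> 's \<Rightarrow> 'a \<Rightarrow> 's \<Rightarrow> real) \<Rightarrow> ('c \<Rightarrow> 'u \<Rightarrow> 's \<Rightarrow> 'a)
    \<Rightarrow> ('c \<Rightarrow> real^'u \<Rightarrow> real^'u \<Rightarrow> 'u \<Rightarrow> 'u \<Rightarrow> real) \<Rightarrow> (('c,'s,'u) pstate \<Rightarrow> real^'u^'c)
    \<Rightarrow> ('c \<Rightarrow> real) \<Rightarrow> real \<Rightarrow> (real \<Rightarrow> ('c,'s,'u) pstate) \<Rightarrow> bool" where
  "is_solution Sset Pset m Act phi pol rho F kappa \<epsilon> \<mu> \<longleftrightarrow>
     (\<forall>t\<ge>0. \<mu> t \<in> Xset Sset Pset m \<and>
        (\<mu> has_vector_derivative Efield Sset Pset Act phi pol rho F kappa \<epsilon> (\<mu> t)) (at t within {0..}))"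

end

theory Submission
  imports Defs
begin

text \<open>
  Let \<open>x = \<mu>[S,\<cdot>]\<close> be the policy aggregate of a population state \<open>\<mu>\<close> and write \<open>B\<close> for
  \<open>B_{S\<rightarrow>K}\<close>. Summing (E) over the states cancels the Markov part exactly, so \<open>x\<close> follows the
  reduced field (R) except that the payoff is evaluated at \<open>\<mu>\<close> instead of at \<open>B x\<close>; the
  discrepancy is \<open>O(|\<mu> - B x|)\<close>. For each class \<open>c\<close> and policy \<open>u\<close> the deviation
  \<open>\<mu>^c[\<cdot>,u] - x_u \<eta>^{c,u}\<close> is driven by the generator \<open>(\<kappa>^c/\<epsilon>)(\<phi>^{c,u} - I)\<close> plus a bounded
  forcing. The unique recurrent class makes some state accessible from every state, so the
  transition semigroup contracts zero-sum vectors in \<open>\<ell>\<^sub>1\<close> (Doeblin), and the deviation is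
  \<open>O(\<epsilon> (1/t + 1))\<close>. Hence after any fixed time \<open>x\<close> follows (R) up to an arbitrarily small
  perturbation once \<open>\<epsilon>\<close> is small. A strict Lyapunov function tolerates such perturbations away
  from \<open>M_F\<close>: it traps trajectories that start near \<open>M_F\<close> and, when it is defined on all of
  \<open>D_x\<close>, draws every trajectory near \<open>M_F\<close> within a uniform time. Finally \<open>B\<close> is Lipschitz,
  which turns closeness to \<open>M_F\<close> into closeness to \<open>M\<close>.
\<close>

section \<open>Square matrices as a Banach algebra\<close>

text \<open>\<open>real^'n^'n\<close> is not a ring instance; the copy below, normed by the maximal column sum
  (the operator norm for \<open>\<ell>\<^sub>1\<close>), is a Banach algebra, so the library exponential applies to it.\<close>

typedef ('n::finite) sqmat = "UNIV :: (real^'n^'n) set" morphisms mat_of sqmat_of by auto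

setup_lifting type_definition_sqmat

instantiation sqmat :: (finite) real_vector
begin
lift_definition zero_sqmat :: "'a sqmat" is "0" .
lift_definition plus_sqmat :: "'a sqmat \<Rightarrow> 'a sqmat \<Rightarrow> 'a sqmat" is "(+)" .
lift_definition minus_sqmat :: "'a sqmat \<Rightarrow> 'a sqmat \<Rightarrow> 'a sqmat" is "(-)" .
lift_definition uminus_sqmat :: "'a sqmat \<Rightarrow> 'a sqmat" is "uminus" .
lift_definition scaleR_sqmat :: "real \<Rightarrow> 'a sqmat \<Rightarrow> 'a sqmat" is "scaleR" .
instance
  by standard (transfer, simp add: algebra_simps)+
end

instantiation sqmat :: (finite) ring_1
begin
lift_definition times_sqmat :: "'a sqmat \<Rightarrow> 'a sqmat \<Rightarrow> 'a sqmat" is "(**)" .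
lift_definition one_sqmat :: "'a sqmat" is "mat 1" .
instance
proof
  fix a b c :: "'a sqmat"
  show "a * b * c = a * (b * c)" by transfer (simp add: matrix_mul_assoc)
  show "1 * a = a" by transfer simp
  show "a * 1 = a" by transfer simp
  show "(a + b) * c = a * c + b * c"
    by transfer (vector matrix_matrix_mult_def sum.distrib[symmetric] field_simps)
  show "a * (b + c) = a * b + a * c" by transfer (simp add: matrix_add_ldistrib)
  show "(0::'a sqmat) \<noteq> 1" by transfer (simp add: mat_def vec_eq_iff)
qed
end

definition col_norm :: "real^'n::finite^'n \<Rightarrow> real" where
  "col_norm A = Max (range (\<lambda>b. \<Sum>a\<in>UNIV. \<bar>A$a$b\<bar>))"

lemma col_sum_le_col_norm: "(\<Sum>a\<in>UNIV. \<bar>A$a$b\<bar>) \<le> col_norm A"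
  unfolding col_norm_def by (rule Max_ge) auto

lemma col_norm_leI: "(\<And>b. (\<Sum>a\<in>UNIV. \<bar>A$a$b\<bar>) \<le> c) \<Longrightarrow> col_norm A \<le> c"
  unfolding col_norm_def by (subst Max_le_iff) auto

lemma col_norm_nonneg: "0 \<le> col_norm A"
  by (rule order_trans[OF _ col_sum_le_col_norm]) (simp add: sum_nonneg)

lemma col_norm_triangle: "col_norm (A + B) \<le> col_norm A + col_norm B"
proof (rule col_norm_leI)
  fix b
  have "(\<Sum>a\<in>UNIV. \<bar>(A + B)$a$b\<bar>) \<le> (\<Sum>a\<in>UNIV. \<bar>A$a$b\<bar> + \<bar>B$a$b\<bar>)"
    by (rule sum_mono) (simp add: abs_triangle_ineq)
  also have "\<dots> \<le> col_norm A + col_norm B" by (simp add: sum.distrib add_mono col_sum_le_col_norm)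
  finally show "(\<Sum>a\<in>UNIV. \<bar>(A + B)$a$b\<bar>) \<le> col_norm A + col_norm B" .
qed

lemma col_norm_scaleR: "col_norm (c *\<^sub>R A) = \<bar>c\<bar> * col_norm A"
proof -
  have "col_norm (c *\<^sub>R A) = Max (range (\<lambda>b. \<bar>c\<bar> * (\<Sum>a\<in>UNIV. \<bar>A$a$b\<bar>)))"
    unfolding col_norm_def by (simp add: abs_mult sum_distrib_left)
  also have "\<dots> = \<bar>c\<bar> * col_norm A"
    unfolding col_norm_def
    by (subst mono_Max_commute[where f="\<lambda>x. \<bar>c\<bar> * x"]) (auto simp: mono_def mult_left_mono image_image)
  finally show ?thesis .
qed

lemma col_norm_eq_0_iff: "col_norm A = 0 \<longleftrightarrow> A = 0"
proof
  assume A: "col_norm A = 0"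
  have "A$a$b = 0" for a b
  proof -
    have "\<bar>A$a$b\<bar> \<le> (\<Sum>a\<in>UNIV. \<bar>A$a$b\<bar>)" by (rule member_le_sum) auto
    also have "\<dots> \<le> 0" using col_sum_le_col_norm[of A b] A by simp
    finally show ?thesis by simp
  qed
  then show "A = 0" by (simp add: vec_eq_iff)
qed (simp add: col_norm_def)

lemma col_norm_mult: "col_norm (A ** B) \<le> col_norm A * col_norm B"
proof (rule col_norm_leI)
  fix b
  have "(\<Sum>a\<in>UNIV. \<bar>(A ** B)$a$b\<bar>) \<le> (\<Sum>a\<in>UNIV. \<Sum>k\<in>UNIV. \<bar>A$a$k\<bar> * \<bar>B$k$b\<bar>)"
    unfolding matrix_matrix_mult_def
    by (rule sum_mono) (auto intro!: order_trans[OF sum_abs] simp: abs_mult)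
  also have "\<dots> = (\<Sum>k\<in>UNIV. (\<Sum>a\<in>UNIV. \<bar>A$a$k\<bar>) * \<bar>B$k$b\<bar>)"
    by (subst sum.swap) (simp add: sum_distrib_right)
  also have "\<dots> \<le> (\<Sum>k\<in>UNIV. col_norm A * \<bar>B$k$b\<bar>)"
    by (rule sum_mono) (simp add: mult_right_mono col_sum_le_col_norm)
  also have "\<dots> \<le> col_norm A * col_norm B"
    by (simp add: sum_distrib_left[symmetric] mult_left_mono col_sum_le_col_norm col_norm_nonneg)
  finally show "(\<Sum>a\<in>UNIV. \<bar>(A ** B)$a$b\<bar>) \<le> col_norm A * col_norm B" .
qed

lemma col_norm_mat_1: "col_norm (mat 1 :: real^'n::finite^'n) = 1"
proof -
  have "(\<Sum>a\<in>UNIV. \<bar>(mat 1 :: real^'n^'n)$a$b\<bar>) = 1" for b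
    by (simp add: mat_def if_distrib[of abs] cong: if_cong)
  then show ?thesis unfolding col_norm_def by simp
qed

instantiation sqmat :: (finite) real_normed_algebra_1
begin
lift_definition norm_sqmat :: "'a sqmat \<Rightarrow> real" is col_norm .
definition dist_sqmat :: "'a sqmat \<Rightarrow> 'a sqmat \<Rightarrow> real" where "dist_sqmat x y = norm (x - y)"
definition sgn_sqmat :: "'a sqmat \<Rightarrow> 'a sqmat" where "sgn_sqmat x = x /\<^sub>R norm x"
definition uniformity_sqmat :: "('a sqmat \<times> 'a sqmat) filter" where
  "uniformity_sqmat = (INF e\<in>{0 <..}. principal {(x, y). dist x y < e})"
definition open_sqmat :: "'a sqmat set \<Rightarrow> bool" where
  "open_sqmat U = (\<forall>x\<in>U. eventually (\<lambda>(x', y). x' = x \<longrightarrow> y \<in> U) uniformity)"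
instance
proof
  fix x y :: "'a sqmat" and a :: real
  show "dist x y = norm (x - y)" by (simp add: dist_sqmat_def)
  show "sgn x = x /\<^sub>R norm x" by (simp add: sgn_sqmat_def)
  show "norm x = 0 \<longleftrightarrow> x = 0" by transfer (rule col_norm_eq_0_iff)
  show "norm (x + y) \<le> norm x + norm y" by transfer (rule col_norm_triangle)
  show "norm (a *\<^sub>R x) = \<bar>a\<bar> * norm x" by transfer (rule col_norm_scaleR)
  show "norm (x * y) \<le> norm x * norm y" by transfer (rule col_norm_mult)
  show "norm (1::'a sqmat) = 1" by transfer (rule col_norm_mat_1)
  show "a *\<^sub>R x * y = a *\<^sub>R (x * y)"
    by transfer (vector matrix_matrix_mult_def sum_distrib_left field_simps)
  show "x * a *\<^sub>R y = a *\<^sub>R (x * y)"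
    by transfer (vector matrix_matrix_mult_def sum_distrib_left field_simps)
qed (simp_all add: uniformity_sqmat_def open_sqmat_def)
end

lemma norm_le_sum_norm_cart: "norm (x::'a::real_normed_vector^'n::finite) \<le> (\<Sum>i\<in>UNIV. norm (x$i))"
  by (simp add: norm_vec_def L2_set_le_sum)

lemma norm_le_col_norm: "norm A \<le> real CARD('n) * col_norm (A::real^'n::finite^'n)"
proof -
  have "norm A \<le> (\<Sum>a\<in>UNIV. norm (A$a))" by (rule norm_le_sum_norm_cart)
  also have "\<dots> \<le> (\<Sum>a\<in>UNIV. \<Sum>b\<in>UNIV. \<bar>A$a$b\<bar>)" by (rule sum_mono) (rule norm_le_l1_cart)
  also have "\<dots> = (\<Sum>b\<in>UNIV. \<Sum>a\<in>UNIV. \<bar>A$a$b\<bar>)" by (rule sum.swap)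
  also have "\<dots> \<le> (\<Sum>b\<in>(UNIV::'n set). col_norm A)" by (rule sum_mono) (rule col_sum_le_col_norm)
  finally show ?thesis by simp
qed

lemma col_norm_le_norm: "col_norm (A::real^'n::finite^'n) \<le> real CARD('n) * norm A"
proof (rule col_norm_leI)
  fix b
  have "(\<Sum>a\<in>UNIV. \<bar>A$a$b\<bar>) \<le> (\<Sum>a\<in>(UNIV::'n set). norm A)"
    by (rule sum_mono) (rule order_trans[OF component_le_norm_cart Finite_Cartesian_Product.norm_nth_le])
  then show "(\<Sum>a\<in>UNIV. \<bar>A$a$b\<bar>) \<le> real CARD('n) * norm A" by simp
qed

instance sqmat :: (finite) banach
proof
  fix X :: "nat \<Rightarrow> 'a sqmat"
  assume X: "Cauchy X"
  define n where "n = real CARD('a)"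
  have n: "n > 0" unfolding n_def by simp
  have "Cauchy (\<lambda>k. mat_of (X k))"
  proof (rule metric_CauchyI)
    fix e :: real assume "e > 0"
    then obtain M where M: "\<forall>k\<ge>M. \<forall>l\<ge>M. dist (X k) (X l) < e / n"
      using metric_CauchyD[OF X, of "e/n"] n by auto
    have "dist (mat_of (X k)) (mat_of (X l)) < e" if "k \<ge> M" "l \<ge> M" for k l
    proof -
      have "dist (mat_of (X k)) (mat_of (X l)) \<le> n * col_norm (mat_of (X k - X l))"
        unfolding n_def dist_norm minus_sqmat.rep_eq by (rule norm_le_col_norm)
      also have "\<dots> = n * dist (X k) (X l)" by (simp add: dist_norm norm_sqmat.rep_eq)
      also have "\<dots> < n * (e / n)" using M that n by (intro mult_strict_left_mono) auto
      finally show ?thesis using n by simp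
    qed
    then show "\<exists>M. \<forall>m\<ge>M. \<forall>n\<ge>M. dist (mat_of (X m)) (mat_of (X n)) < e" by blast
  qed
  then obtain L where L: "(\<lambda>k. mat_of (X k)) \<longlonglongrightarrow> L"
    using Cauchy_convergent_iff convergent_def by blast
  have "X \<longlonglongrightarrow> sqmat_of L"
  proof (rule metric_LIMSEQ_I)
    fix r :: real assume "r > 0"
    then obtain k0 where k0: "\<forall>k\<ge>k0. dist (mat_of (X k)) L < r / n"
      using L[unfolded lim_sequentially] n by (meson divide_pos_pos)
    have "dist (X k) (sqmat_of L) < r" if "k \<ge> k0" for k
    proof -
      have "dist (X k) (sqmat_of L) = col_norm (mat_of (X k) - L)"
        by (simp add: dist_norm norm_sqmat.rep_eq minus_sqmat.rep_eq sqmat_of_inverse)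
      also have "\<dots> \<le> n * norm (mat_of (X k) - L)" unfolding n_def by (rule col_norm_le_norm)
      also have "\<dots> < n * (r / n)" using k0 that n by (intro mult_strict_left_mono) (auto simp: dist_norm)
      finally show ?thesis using n by simp
    qed
    then show "\<exists>k0. \<forall>k\<ge>k0. dist (X k) (sqmat_of L) < r" by blast
  qed
  then show "convergent X" unfolding convergent_def by blast
qed

section \<open>Column-stochastic matrices\<close>

definition entry :: "'n::finite \<Rightarrow> 'n \<Rightarrow> 'n sqmat \<Rightarrow> real" where
  "entry a b X = mat_of X $ a $ b"

text \<open>Column \<open>b\<close> is the distribution of the successor of state \<open>b\<close>, so \<open>entry a b (M ^ m)\<close> is the
  probability of going from \<open>b\<close> to \<open>a\<close> in \<open>m\<close> steps.\<close>

definition stochastic :: "'n::finite sqmat \<Rightarrow> bool" where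
  "stochastic M \<longleftrightarrow> (\<forall>a b. 0 \<le> entry a b M) \<and> (\<forall>b. (\<Sum>a\<in>UNIV. entry a b M) = 1)"

definition norm1 :: "real^'n::finite \<Rightarrow> real" where
  "norm1 v = (\<Sum>a\<in>UNIV. \<bar>v$a\<bar>)"

definition vec_sum :: "real^'n::finite \<Rightarrow> real" where
  "vec_sum v = (\<Sum>a\<in>UNIV. v$a)"

lemma entry_add [simp]: "entry a b (X + Y) = entry a b X + entry a b Y"
  by (simp add: entry_def plus_sqmat.rep_eq)

lemma entry_diff [simp]: "entry a b (X - Y) = entry a b X - entry a b Y"
  by (simp add: entry_def minus_sqmat.rep_eq)

lemma entry_scaleR [simp]: "entry a b (r *\<^sub>R X) = r * entry a b X"
  by (simp add: entry_def scaleR_sqmat.rep_eq)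

lemma entry_mult: "entry a b (X * Y) = (\<Sum>k\<in>UNIV. entry a k X * entry k b Y)"
  by (simp add: entry_def times_sqmat.rep_eq matrix_matrix_mult_def)

lemma entry_one: "entry a b (1::'n::finite sqmat) = (if a = b then 1 else 0)"
  by (simp add: entry_def one_sqmat.rep_eq mat_def)

lemma abs_entry_le_norm: "\<bar>entry a b X\<bar> \<le> norm X"
proof -
  have "\<bar>entry a b X\<bar> \<le> (\<Sum>a\<in>UNIV. \<bar>mat_of X$a$b\<bar>)" unfolding entry_def by (rule member_le_sum) auto
  also have "\<dots> \<le> norm X" by (simp add: norm_sqmat.rep_eq col_sum_le_col_norm)
  finally show ?thesis .
qed

lemma bounded_linear_entry: "bounded_linear (entry a b :: 'n::finite sqmat \<Rightarrow> real)"
  by (rule bounded_linear_intro[where K=1]) (auto simp: abs_entry_le_norm)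

lemma norm1_nonneg: "0 \<le> norm1 v"
  unfolding norm1_def by (simp add: sum_nonneg)

lemma norm1_triangle_diff: "norm1 x \<le> norm1 (x - y) + norm1 y"
  unfolding norm1_def
  by (simp add: sum.distrib[symmetric] sum_mono abs_triangle_ineq4 order_trans[OF _ abs_triangle_ineq])

lemma mat_of_times_vec: "mat_of (X * Y) *v v = mat_of X *v (mat_of Y *v v)"
  by (simp add: times_sqmat.rep_eq matrix_vector_mul_assoc)

lemma mat_of_vec_nth: "(mat_of X *v v) $ a = (\<Sum>b\<in>UNIV. entry a b X * v $ b)"
  by (simp add: entry_def matrix_vector_mult_def)

lemma bounded_bilinear_mat_of_vec: "bounded_bilinear (\<lambda>(M::'n::finite sqmat) (v::real^'n). mat_of M *v v)"
proof
  fix a a' :: "'n sqmat" and b b' :: "real^'n" and r :: real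
  show "mat_of (a + a') *v b = mat_of a *v b + mat_of a' *v b"
    by (simp add: plus_sqmat.rep_eq matrix_vector_mult_add_rdistrib)
  show "mat_of a *v (b + b') = mat_of a *v b + mat_of a *v b'"
    by (simp add: matrix_vector_right_distrib)
  show "mat_of (r *\<^sub>R a) *v b = r *\<^sub>R (mat_of a *v b)"
    by (simp add: scaleR_sqmat.rep_eq vec_eq_iff matrix_vector_mult_def sum_distrib_left algebra_simps)
  show "mat_of a *v (r *\<^sub>R b) = r *\<^sub>R (mat_of a *v b)"
    by (simp add: matrix_vector_mult_scaleR)
next
  show "\<exists>K. \<forall>(a::'n sqmat) (b::real^'n). norm (mat_of a *v b) \<le> norm a * norm b * K"
  proof (intro exI allI)
    fix a :: "'n sqmat" and b :: "real^'n"
    have "norm (mat_of a *v b) \<le> norm1 (mat_of a *v b)" unfolding norm1_def by (rule norm_le_l1_cart)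
    also have "\<dots> \<le> (\<Sum>i\<in>UNIV. \<Sum>j\<in>UNIV. \<bar>entry i j a\<bar> * \<bar>b$j\<bar>)"
      unfolding norm1_def mat_of_vec_nth by (intro sum_mono order_trans[OF sum_abs]) (simp add: abs_mult)
    also have "\<dots> = (\<Sum>j\<in>UNIV. (\<Sum>i\<in>UNIV. \<bar>entry i j a\<bar>) * \<bar>b$j\<bar>)"
      by (subst sum.swap) (simp add: sum_distrib_right)
    also have "\<dots> \<le> (\<Sum>j\<in>(UNIV::'n set). norm a * norm b)"
    proof (rule sum_mono)
      fix j
      have "(\<Sum>i\<in>UNIV. \<bar>entry i j a\<bar>) \<le> norm a"
        by (simp add: entry_def norm_sqmat.rep_eq col_sum_le_col_norm)
      then show "(\<Sum>i\<in>UNIV. \<bar>entry i j a\<bar>) * \<bar>b$j\<bar> \<le> norm a * norm b"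
        by (intro mult_mono) (auto simp: component_le_norm_cart)
    qed
    also have "\<dots> = norm a * norm b * real CARD('n)" by simp
    finally show "norm (mat_of a *v b) \<le> norm a * norm b * real CARD('n)" .
  qed
qed

lemma stochastic_one: "stochastic (1::'n::finite sqmat)"
  unfolding stochastic_def by (simp add: entry_one)

lemma stochastic_mult: assumes "stochastic X" "stochastic Y" shows "stochastic (X * Y)"
proof -
  have "(\<Sum>a\<in>UNIV. entry a b (X * Y)) = (\<Sum>k\<in>UNIV. (\<Sum>a\<in>UNIV. entry a k X) * entry k b Y)" for b
    unfolding entry_mult by (subst sum.swap) (simp add: sum_distrib_right)
  then show ?thesis using assms unfolding stochastic_def by (auto simp: entry_mult intro!: sum_nonneg)
qed

lemma stochastic_power: "stochastic X \<Longrightarrow> stochastic (X ^ n)"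
  by (induction n) (auto simp: stochastic_one stochastic_mult)

lemma stochastic_entry_mult_pos:
  assumes "stochastic M1" "stochastic M2" "0 < entry a k M1" "0 < entry k b M2"
  shows "0 < entry a b (M1 * M2)"
proof -
  have "entry a k M1 * entry k b M2 \<le> (\<Sum>j\<in>UNIV. entry a j M1 * entry j b M2)"
    using assms(1,2) unfolding stochastic_def by (intro member_le_sum) auto
  moreover have "0 < entry a k M1 * entry k b M2" using assms(3,4) by simp
  ultimately show ?thesis unfolding entry_mult by linarith
qed

lemma stochastic_norm1_le: assumes "stochastic M" shows "norm1 (mat_of M *v v) \<le> norm1 v"
proof -
  have "norm1 (mat_of M *v v) \<le> (\<Sum>a\<in>UNIV. \<Sum>b\<in>UNIV. entry a b M * \<bar>v$b\<bar>)"
    unfolding norm1_def mat_of_vec_nth using assms unfolding stochastic_def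
    by (intro sum_mono order_trans[OF sum_abs]) (simp add: abs_mult)
  also have "\<dots> = (\<Sum>b\<in>UNIV. (\<Sum>a\<in>UNIV. entry a b M) * \<bar>v$b\<bar>)"
    by (subst sum.swap) (simp add: sum_distrib_right)
  also have "\<dots> = norm1 v" using assms unfolding stochastic_def norm1_def by simp
  finally show ?thesis .
qed

lemma stochastic_vec_sum: assumes "stochastic M" shows "vec_sum (mat_of M *v v) = vec_sum v"
proof -
  have "vec_sum (mat_of M *v v) = (\<Sum>b\<in>UNIV. (\<Sum>a\<in>UNIV. entry a b M) * v$b)"
    unfolding vec_sum_def mat_of_vec_nth by (subst sum.swap) (simp add: sum_distrib_right)
  then show ?thesis using assms unfolding stochastic_def vec_sum_def by simp
qed

text \<open>Doeblin: if row \<open>s0\<close> of \<open>M\<close> is bounded below by \<open>\<delta>\<close>, then \<open>M\<close> minus that row is still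
  nonnegative with column sums \<open>1 - \<delta>\<close>, and the subtracted row does not act on zero-sum vectors.\<close>

lemma doeblin_contraction:
  assumes "stochastic M" "\<And>b. \<delta> \<le> entry s0 b M" "vec_sum v = 0"
  shows "norm1 (mat_of M *v v) \<le> (1 - \<delta>) * norm1 v"
proof -
  define N where "N a b = entry a b M - (if a = s0 then \<delta> else 0)" for a b
  have N_nonneg: "0 \<le> N a b" for a b using assms(1,2) unfolding N_def stochastic_def by auto
  have Mv: "(mat_of M *v v) $ a = (\<Sum>b\<in>UNIV. N a b * v $ b)" for a
  proof -
    have "(\<Sum>b\<in>UNIV. N a b * v $ b) = (\<Sum>b\<in>UNIV. entry a b M * v $ b) - (if a = s0 then \<delta> else 0) * vec_sum v"
      unfolding N_def vec_sum_def by (simp add: algebra_simps sum_subtractf sum_distrib_left)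
    then show ?thesis using assms(3) by (simp add: mat_of_vec_nth)
  qed
  have N_col: "(\<Sum>a\<in>UNIV. N a b) = 1 - \<delta>" for b
    using assms(1) unfolding N_def stochastic_def by (simp add: sum_subtractf)
  have "norm1 (mat_of M *v v) \<le> (\<Sum>a\<in>UNIV. \<Sum>b\<in>UNIV. N a b * \<bar>v$b\<bar>)"
    unfolding norm1_def Mv using N_nonneg by (intro sum_mono order_trans[OF sum_abs]) (simp add: abs_mult)
  also have "\<dots> = (\<Sum>b\<in>UNIV. (\<Sum>a\<in>UNIV. N a b) * \<bar>v$b\<bar>)"
    by (subst sum.swap) (simp add: sum_distrib_right)
  also have "\<dots> = (1 - \<delta>) * norm1 v" unfolding N_col norm1_def by (simp add: sum_distrib_left)
  finally show ?thesis .
qed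

section \<open>Comparison lemmas for differentiable functions\<close>

lemma sublevel_invariant:
  fixes f f' :: "real \<Rightarrow> real"
  assumes ab: "a \<le> b" and f': "\<And>t. t \<in> {a..b} \<Longrightarrow> (f has_real_derivative f' t) (at t within {a..b})"
    and fa: "f a \<le> l" and f'_nonpos: "\<And>t. t \<in> {a..b} \<Longrightarrow> l < f t \<Longrightarrow> f' t \<le> 0"
  shows "f b \<le> l"
proof (rule ccontr)
  assume fb: "\<not> f b \<le> l"
  define S where "S = {a..b} \<inter> f -` {..l}"
  have "closed S" unfolding S_def by (rule continuous_closed_preimage[OF DERIV_continuous_on[OF f']]) auto
  moreover have "a \<in> S" "bdd_above S" unfolding S_def using ab fa by auto
  ultimately have s0: "Sup S \<in> S" by (intro closed_contains_Sup) auto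
  then have s0b: "Sup S < b" "a \<le> Sup S" using fb unfolding S_def by (auto simp: order.order_iff_strict)
  have "\<exists>x\<in>{Sup S<..<b}. f b - f (Sup S) = f' x * (b - Sup S)"
  proof (rule mvt_simple[OF s0b(1)])
    fix x assume "Sup S \<le> x" "x \<le> b"
    then have "(f has_real_derivative f' x) (at x within {Sup S..b})"
      using f'[of x] s0b by (auto intro: DERIV_subset)
    then show "(f has_derivative (\<lambda>h. f' x * h)) (at x within {Sup S..b})"
      by (simp add: has_field_derivative_def)
  qed
  then obtain x where x: "Sup S < x" "x < b" "f b - f (Sup S) = f' x * (b - Sup S)" by auto
  have "x \<notin> S" using cSup_upper[of x S] \<open>bdd_above S\<close> x(1) by auto
  then have "l < f x" using x s0b unfolding S_def by auto
  then have "f' x * (b - Sup S) \<le> 0" using f'_nonpos[of x] x s0b by (simp add: mult_nonpos_nonneg)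
  then show False using x(3) s0 fb unfolding S_def by auto
qed

lemma decrease_by_slope:
  fixes f f' :: "real \<Rightarrow> real"
  assumes ab: "a \<le> b" and f': "\<And>t. t \<in> {a..b} \<Longrightarrow> (f has_real_derivative f' t) (at t within {a..b})"
    and slope: "\<And>t. t \<in> {a..b} \<Longrightarrow> f' t \<le> - k"
  shows "f b \<le> f a - k * (b - a)"
proof -
  obtain x where x: "x \<in> {a..b}" "f b - f a = f' x * (b - a)"
    using mvt_very_simple[OF ab, of f "\<lambda>t h. f' t * h"] f' by (auto simp: has_field_derivative_def)
  have "f' x * (b - a) \<le> - k * (b - a)" using slope[OF x(1)] ab by (intro mult_right_mono) auto
  then show ?thesis using x by simp
qed

text \<open>Pairing with the sign vector of the total increment reduces the \<open>\<ell>\<^sub>1\<close>-estimate to a scalar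
  one.\<close>

lemma norm1_increment_le:
  fixes \<phi> :: "real \<Rightarrow> real^'n::finite"
  assumes \<phi>': "\<And>t. t \<in> {0..T} \<Longrightarrow> (\<phi> has_vector_derivative \<phi>' t) (at t within {0..T})"
    and \<psi>': "\<And>t. t \<in> {0..T} \<Longrightarrow> (\<psi> has_real_derivative \<psi>' t) (at t within {0..T})"
    and bound: "\<And>t. t \<in> {0..T} \<Longrightarrow> norm1 (\<phi>' t) \<le> \<psi>' t" and T: "0 \<le> T"
  shows "norm1 (\<phi> T - \<phi> 0) \<le> \<psi> T - \<psi> 0"
proof -
  define \<sigma> :: "real^'n" where "\<sigma> = (\<chi> a. if 0 \<le> (\<phi> T - \<phi> 0) $ a then 1 else - 1)"
  have \<sigma>_le: "\<sigma> \<bullet> x \<le> norm1 x" for x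
    unfolding inner_vec_def norm1_def \<sigma>_def by (intro sum_mono) auto
  have \<sigma>_eq: "\<sigma> \<bullet> (\<phi> T - \<phi> 0) = norm1 (\<phi> T - \<phi> 0)"
    unfolding inner_vec_def norm1_def \<sigma>_def by (intro sum.cong) auto
  have "((\<lambda>t. \<sigma> \<bullet> \<phi> t - \<psi> t) has_real_derivative \<sigma> \<bullet> \<phi>' t - \<psi>' t) (at t within {0..T})"
    if "t \<in> {0..T}" for t
    using bounded_linear.has_vector_derivative[OF bounded_linear_inner_right \<phi>'[OF that]] \<psi>'[OF that]
    by (intro DERIV_diff) (auto simp: has_real_derivative_iff_has_vector_derivative)
  moreover have "\<sigma> \<bullet> \<phi>' t - \<psi>' t \<le> - 0" if "t \<in> {0..T}" for t
    using \<sigma>_le[of "\<phi>' t"] bound[OF that] by simp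
  ultimately have "\<sigma> \<bullet> \<phi> T - \<psi> T \<le> \<sigma> \<bullet> \<phi> 0 - \<psi> 0 - 0 * (T - 0)"
    by (rule decrease_by_slope[OF T])
  then show ?thesis unfolding \<sigma>_eq[symmetric] by (simp add: inner_diff_right)
qed

text \<open>Stop at the first time \<open>\<tau>\<close> at which \<open>d\<close> reaches \<open>r\<close>: up to \<open>\<tau>\<close> the function \<open>f\<close> is
  differentiable and cannot climb above \<open>l\<close>, but at \<open>\<tau>\<close> it would have to.\<close>

lemma barrier_not_reached:
  fixes d f f' :: "real \<Rightarrow> real"
  assumes d_cont: "continuous_on {a..} d" and d_a: "d a < r"
    and f': "\<And>b t. t \<in> {a..b} \<Longrightarrow> (\<forall>s\<in>{a..b}. d s \<le> r) \<Longrightarrow> (f has_real_derivative f' t) (at t within {a..b})"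
    and f_a: "f a \<le> l"
    and f'_nonpos: "\<And>t. a \<le> t \<Longrightarrow> d t \<le> r \<Longrightarrow> l < f t \<Longrightarrow> f' t \<le> 0"
    and barrier: "\<And>t. a \<le> t \<Longrightarrow> d t = r \<Longrightarrow> l < f t"
    and t: "a \<le> t"
  shows "d t < r"
proof (rule ccontr)
  assume "\<not> d t < r"
  define S where "S = {a..t} \<inter> d -` {r..}"
  have "closed S"
    unfolding S_def by (rule continuous_closed_preimage[OF continuous_on_subset[OF d_cont]]) auto
  moreover have "t \<in> S" "bdd_below S" using t \<open>\<not> d t < r\<close> unfolding S_def by auto
  ultimately have \<tau>S: "Inf S \<in> S" by (intro closed_contains_Inf) auto
  define \<tau> where "\<tau> = Inf S"
  have \<tau>: "a < \<tau>" "r \<le> d \<tau>" using \<tau>S d_a unfolding S_def \<tau>_def by (auto simp: order.order_iff_strict)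
  have below: "d s < r" if "s \<in> {a..<\<tau>}" for s
    using cInf_lower[of s S] \<open>bdd_below S\<close> that \<tau>S unfolding S_def \<tau>_def by force
  have d_le: "\<forall>s\<in>{a..\<tau>}. d s \<le> r"
  proof -
    define S' where "S' = {a..\<tau>} \<inter> d -` {..r}"
    have "closed S'"
      unfolding S'_def by (rule continuous_closed_preimage[OF continuous_on_subset[OF d_cont]]) auto
    moreover have "{a..<\<tau>} \<subseteq> S'" unfolding S'_def using below by fastforce
    ultimately have "closure {a..<\<tau>} \<subseteq> S'" by (rule closure_minimal[rotated])
    then show ?thesis using \<tau>(1) unfolding S'_def by auto
  qed
  have "f \<tau> \<le> l"
    by (rule sublevel_invariant[of a \<tau> f f']) (use \<tau> f' d_le f_a f'_nonpos in auto)
  moreover have "l < f \<tau>" using barrier[of \<tau>] d_le \<tau> by (simp add: order.antisym)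
  ultimately show False by simp
qed

lemma exp_neg_le_inverse:
  assumes "0 < (y::real)" shows "exp (- y) \<le> 1 / y"
proof -
  have "y \<le> exp y" using exp_ge_add_one_self[of y] by linarith
  then show ?thesis using assms by (simp add: exp_minus field_simps)
qed

section \<open>Continuous-time chains with a state accessible from everywhere\<close>

locale accessible_chain =
  fixes A :: "'n::finite sqmat"
  assumes A_stochastic: "stochastic A"
    and accessible: "\<exists>s0. \<forall>b. \<exists>m. 0 < entry s0 b (A ^ m)"
begin

definition transition :: "real \<Rightarrow> 'n sqmat" where
  "transition s = exp (s *\<^sub>R (A - 1))"

lemma entry_exp_sums: "(\<lambda>n. (s ^ n / fact n) * entry a b (A ^ n)) sums entry a b (exp (s *\<^sub>R A))"
proof -
  have "(\<lambda>n. entry a b ((s *\<^sub>R A) ^ n /\<^sub>R fact n)) sums entry a b (exp (s *\<^sub>R A))"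
    by (rule bounded_linear.sums[OF bounded_linear_entry exp_converges])
  then show ?thesis by (simp add: scaleR_power divide_inverse mult.commute)
qed

lemma col_sum_exp: "(\<Sum>a\<in>UNIV. entry a b (exp (s *\<^sub>R A))) = exp s"
proof -
  have "(\<lambda>n. \<Sum>a\<in>UNIV. entry a b ((s *\<^sub>R A) ^ n /\<^sub>R fact n)) sums (\<Sum>a\<in>UNIV. entry a b (exp (s *\<^sub>R A)))"
    by (rule bounded_linear.sums[OF bounded_linear_sum[OF bounded_linear_entry] exp_converges])
  moreover have "(\<Sum>a\<in>UNIV. entry a b ((s *\<^sub>R A) ^ n /\<^sub>R fact n)) = s ^ n /\<^sub>R fact n" for n
  proof -
    have "(\<Sum>a\<in>UNIV. entry a b ((s *\<^sub>R A) ^ n /\<^sub>R fact n)) = (s ^ n / fact n) * (\<Sum>a\<in>UNIV. entry a b (A ^ n))"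
      by (simp add: scaleR_power sum_distrib_left divide_inverse mult.commute mult.left_commute)
    also have "\<dots> = s ^ n /\<^sub>R fact n"
      using stochastic_power[OF A_stochastic, of n] unfolding stochastic_def by (simp add: divide_inverse mult.commute)
    finally show ?thesis .
  qed
  ultimately have "(\<lambda>n. s ^ n /\<^sub>R fact n) sums (\<Sum>a\<in>UNIV. entry a b (exp (s *\<^sub>R A)))" by simp
  then show ?thesis using exp_converges[of s] sums_unique2 by blast
qed

lemma entry_exp_ge_term:
  assumes "0 \<le> s" shows "(s ^ m / fact m) * entry a b (A ^ m) \<le> entry a b (exp (s *\<^sub>R A))"
proof -
  have "sum (\<lambda>n. (s ^ n / fact n) * entry a b (A ^ n)) {m} \<le> (\<Sum>n. (s ^ n / fact n) * entry a b (A ^ n))"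
    by (rule sum_le_suminf[OF sums_summable[OF entry_exp_sums]])
       (use assms stochastic_power[OF A_stochastic] in \<open>auto simp: stochastic_def\<close>)
  then show ?thesis using sums_unique[OF entry_exp_sums] by simp
qed

lemma entry_exp_nonneg: "0 \<le> s \<Longrightarrow> 0 \<le> entry a b (exp (s *\<^sub>R A))"
  using entry_exp_ge_term[of s 0] stochastic_power[OF A_stochastic, of 0]
  by (simp add: stochastic_def) (meson order_trans)

lemma transition_eq: "transition s = exp (- s) *\<^sub>R exp (s *\<^sub>R A)"
proof -
  have "s *\<^sub>R (A - 1) = s *\<^sub>R A + (- s) *\<^sub>R 1" by (simp add: algebra_simps)
  moreover have "(s *\<^sub>R A) * ((- s) *\<^sub>R 1) = ((- s) *\<^sub>R 1) * (s *\<^sub>R A)" by simp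
  ultimately have "transition s = exp (s *\<^sub>R A) * exp ((- s) *\<^sub>R 1)"
    unfolding transition_def by (simp only: exp_add_commuting)
  also have "exp ((- s) *\<^sub>R (1::'n sqmat)) = of_real (exp (- s))"
    using exp_of_real[of "- s", where 'a="'n sqmat"] by (simp add: of_real_def)
  finally show ?thesis by (simp add: of_real_def)
qed

lemma transition_stochastic: "0 \<le> s \<Longrightarrow> stochastic (transition s)"
  unfolding stochastic_def transition_eq
  by (simp add: entry_exp_nonneg sum_distrib_left[symmetric] col_sum_exp exp_minus)

lemma transition_add: "transition (s + t) = transition s * transition t"
proof -
  have "(s *\<^sub>R (A - 1)) * (t *\<^sub>R (A - 1)) = (t *\<^sub>R (A - 1)) * (s *\<^sub>R (A - 1))" by simp
  then show ?thesis unfolding transition_def by (simp add: scaleR_add_left exp_add_commuting)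
qed

lemma transition_has_vector_derivative:
  "(transition has_vector_derivative transition s * (A - 1)) (at s within S)"
  unfolding transition_def by (rule exp_scaleR_has_vector_derivative_right)

lemma transition_1_doeblin: "\<exists>s0 \<delta>. 0 < \<delta> \<and> \<delta> \<le> 1/2 \<and> (\<forall>b. \<delta> \<le> entry s0 b (transition 1))"
proof -
  obtain s0 mb where mb: "\<And>b. 0 < entry s0 b (A ^ mb b)" using accessible by metis
  define d where "d b = exp (- 1) * (entry s0 b (A ^ mb b) / fact (mb b))" for b
  have d_pos: "0 < d b" for b unfolding d_def using mb[of b] by simp
  have d_le: "d b \<le> entry s0 b (transition 1)" for b
    using mult_left_mono[OF entry_exp_ge_term[of 1 "mb b" s0 b], of "exp (- 1)"]
    unfolding d_def transition_eq by simp
  have "0 < Min (range d)" using d_pos by (subst Min_gr_iff) auto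
  moreover have "Min (range d) \<le> entry s0 b (transition 1)" for b
  proof -
    have "Min (range d) \<le> d b" by (rule Min_le) auto
    then show ?thesis using d_le[of b] by linarith
  qed
  ultimately show ?thesis
    by (intro exI[of _ s0] exI[of _ "min (1/2) (Min (range d))"]) (auto intro: min.coboundedI2)
qed

lemma transition_contracts:
  "\<exists>C \<gamma>. 1 \<le> C \<and> 0 < \<gamma> \<and>
     (\<forall>s v. 0 \<le> s \<longrightarrow> vec_sum v = 0 \<longrightarrow> norm1 (mat_of (transition s) *v v) \<le> C * exp (- \<gamma> * s) * norm1 v)"
proof -
  obtain s0 \<delta> where \<delta>: "0 < \<delta>" "\<delta> \<le> 1/2" "\<And>b. \<delta> \<le> entry s0 b (transition 1)"
    using transition_1_doeblin by blast
  have geometric: "norm1 (mat_of (transition s) *v v) \<le> (1 - \<delta>) ^ n * norm1 v"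
    if "real n \<le> s" "vec_sum v = 0" for n s v
    using that
  proof (induction n arbitrary: s)
    case 0
    then show ?case using stochastic_norm1_le[OF transition_stochastic] by simp
  next
    case (Suc n)
    have "mat_of (transition s) *v v = mat_of (transition 1) *v (mat_of (transition (s - 1)) *v v)"
      using transition_add[of 1 "s - 1"] by (simp add: mat_of_times_vec)
    moreover have "vec_sum (mat_of (transition (s - 1)) *v v) = 0"
      using stochastic_vec_sum[OF transition_stochastic, of "s - 1" v] Suc.prems by simp
    ultimately have "norm1 (mat_of (transition s) *v v) \<le> (1 - \<delta>) * norm1 (mat_of (transition (s - 1)) *v v)"
      using doeblin_contraction[OF transition_stochastic[of 1] \<delta>(3)] by simp
    also have "\<dots> \<le> (1 - \<delta>) * ((1 - \<delta>) ^ n * norm1 v)"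
      using Suc \<delta> by (intro mult_left_mono) auto
    finally show ?case by simp
  qed
  define \<gamma> where "\<gamma> = - ln (1 - \<delta>)"
  have \<gamma>: "0 < \<gamma>" unfolding \<gamma>_def using \<delta> by simp
  have "norm1 (mat_of (transition s) *v v) \<le> exp \<gamma> * exp (- \<gamma> * s) * norm1 v"
    if s: "0 \<le> s" and v: "vec_sum v = 0" for s v
  proof -
    define n where "n = nat \<lfloor>s\<rfloor>"
    have n: "real n \<le> s" "s - 1 \<le> real n" unfolding n_def using s by linarith+
    have "(1 - \<delta>) ^ n = exp (- \<gamma> * real n)"
      using exp_of_nat_mult[of n "ln (1 - \<delta>)"] \<delta> unfolding \<gamma>_def by (simp add: mult.commute)
    also have "\<dots> \<le> exp (- \<gamma> * (s - 1))" using \<gamma> n by simp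
    also have "\<dots> = exp \<gamma> * exp (- \<gamma> * s)" by (simp add: algebra_simps exp_add[symmetric])
    finally show ?thesis
      using geometric[OF n(1) v] norm1_nonneg[of v] by (meson mult_right_mono order_trans)
  qed
  moreover have "1 \<le> exp \<gamma>" using \<gamma> by simp
  ultimately show ?thesis using \<gamma> by blast
qed

lemma transition_flow_has_vector_derivative:
  assumes "(e has_vector_derivative (k *\<^sub>R (mat_of (A - 1) *v e t) + w t)) (at t within {0..T})"
  shows "((\<lambda>t. mat_of (transition (k * (T - t))) *v e t) has_vector_derivative
           mat_of (transition (k * (T - t))) *v w t) (at t within {0..T})"
proof -
  have "((\<lambda>t. k * (T - t)) has_vector_derivative (- k)) (at t within {0..T})"
    unfolding has_real_derivative_iff_has_vector_derivative[symmetric]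
    by (auto intro!: derivative_eq_intros)
  from vector_diff_chain_within[OF this transition_has_vector_derivative]
  have "((\<lambda>t. transition (k * (T - t))) has_vector_derivative
          (- k) *\<^sub>R (transition (k * (T - t)) * (A - 1))) (at t within {0..T})"
    by (simp add: o_def)
  from bounded_bilinear.has_vector_derivative[OF bounded_bilinear_mat_of_vec this assms]
  show ?thesis
    using bounded_bilinear.scaleR_left[OF bounded_bilinear_mat_of_vec, of "- k" "transition (k * (T - t)) * (A - 1)" "e t"]
    by (simp add: mat_of_times_vec matrix_vector_right_distrib matrix_vector_mult_scaleR)
qed

text \<open>Variation of constants: the flow \<open>transition (k (T - t)) e(t)\<close> has derivative
  \<open>transition (k (T - t)) w(t)\<close>, whose \<open>\<ell>\<^sub>1\<close>-norm is at most \<open>C W exp (-\<gamma> k (T - t))\<close>.\<close>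

lemma variation_of_constants_norm1:
  assumes contr: "\<And>s v. 0 \<le> s \<Longrightarrow> vec_sum v = 0 \<Longrightarrow> norm1 (mat_of (transition s) *v v) \<le> C * exp (- \<gamma> * s) * norm1 v"
    and C: "0 \<le> C" and \<gamma>: "0 < \<gamma>" and k: "0 < k" and T: "0 \<le> T"
    and e': "\<And>t. t \<in> {0..T} \<Longrightarrow> (e has_vector_derivative (k *\<^sub>R (mat_of (A - 1) *v e t) + w t)) (at t within {0..T})"
    and w: "\<And>t. t \<in> {0..T} \<Longrightarrow> vec_sum (w t) = 0 \<and> norm1 (w t) \<le> W" and e0: "vec_sum (e 0) = 0"
  shows "norm1 (e T) \<le> C * exp (- \<gamma> * (k * T)) * norm1 (e 0) + C * W / (\<gamma> * k)"
proof -
  define \<phi> where "\<phi> t = mat_of (transition (k * (T - t))) *v e t" for t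
  define \<psi> where "\<psi> t = C * W / (\<gamma> * k) * exp (- \<gamma> * (k * (T - t)))" for t
  have W: "0 \<le> W" using w[of 0] norm1_nonneg[of "w 0"] T by auto
  have "norm1 (\<phi> T - \<phi> 0) \<le> \<psi> T - \<psi> 0"
  proof (rule norm1_increment_le[OF _ _ _ T])
    show "(\<phi> has_vector_derivative mat_of (transition (k * (T - t))) *v w t) (at t within {0..T})"
      if "t \<in> {0..T}" for t
      unfolding \<phi>_def by (rule transition_flow_has_vector_derivative) (rule e'[OF that])
    show "(\<psi> has_real_derivative C * W * exp (- \<gamma> * (k * (T - t)))) (at t within {0..T})" for t
      unfolding \<psi>_def using \<gamma> k by (auto intro!: derivative_eq_intros simp: field_simps)
    show "norm1 (mat_of (transition (k * (T - t))) *v w t) \<le> C * W * exp (- \<gamma> * (k * (T - t)))"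
      if t: "t \<in> {0..T}" for t
    proof -
      have "norm1 (mat_of (transition (k * (T - t))) *v w t) \<le> C * exp (- \<gamma> * (k * (T - t))) * norm1 (w t)"
        using t k w by (intro contr) auto
      also have "\<dots> \<le> C * exp (- \<gamma> * (k * (T - t))) * W"
        using t w C by (intro mult_left_mono) auto
      finally show ?thesis by (simp add: algebra_simps)
    qed
  qed
  also have "\<dots> \<le> C * W / (\<gamma> * k)"
    unfolding \<psi>_def using C W \<gamma> k by simp
  finally have "norm1 (\<phi> T - \<phi> 0) \<le> C * W / (\<gamma> * k)" .
  moreover have "norm1 (\<phi> 0) \<le> C * exp (- \<gamma> * (k * T)) * norm1 (e 0)"
    unfolding \<phi>_def using k T e0 contr[of "k * T" "e 0"] by simp
  moreover have "norm1 (e T) \<le> norm1 (\<phi> T - \<phi> 0) + norm1 (\<phi> 0)"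
    using norm1_triangle_diff[of "\<phi> T" "\<phi> 0"] by (simp add: \<phi>_def transition_def one_sqmat.rep_eq)
  ultimately show ?thesis by linarith
qed

end

section \<open>Estimates on nested vectors and revision flows\<close>

lemma norm_le_sum_abs2: "norm (x::real^'b::finite^'a::finite) \<le> (\<Sum>i\<in>UNIV. \<Sum>j\<in>UNIV. \<bar>x$i$j\<bar>)"
proof -
  have "norm x \<le> (\<Sum>i\<in>UNIV. norm (x$i))" by (rule norm_le_sum_norm_cart)
  also have "\<dots> \<le> (\<Sum>i\<in>UNIV. \<Sum>j\<in>UNIV. \<bar>x$i$j\<bar>)" by (intro sum_mono norm_le_l1_cart)
  finally show ?thesis .
qed

lemma norm_le_sum_abs3:
  "norm (x::real^'c::finite^'b::finite^'a::finite) \<le> (\<Sum>i\<in>UNIV. \<Sum>j\<in>UNIV. \<Sum>k\<in>UNIV. \<bar>x$i$j$k\<bar>)"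
proof -
  have "norm x \<le> (\<Sum>i\<in>UNIV. norm (x$i))" by (rule norm_le_sum_norm_cart)
  also have "\<dots> \<le> (\<Sum>i\<in>UNIV. \<Sum>j\<in>UNIV. \<Sum>k\<in>UNIV. \<bar>x$i$j$k\<bar>)" by (intro sum_mono norm_le_sum_abs2)
  finally show ?thesis .
qed

lemma norm_le_of_nth_bound2:
  assumes "\<And>i j. \<bar>x$i$j\<bar> \<le> b"
  shows "norm (x::real^'b::finite^'a::finite) \<le> real CARD('a) * real CARD('b) * b"
proof -
  have "(\<Sum>i\<in>UNIV. \<Sum>j\<in>UNIV. \<bar>x$i$j\<bar>) \<le> (\<Sum>i\<in>(UNIV::'a set). \<Sum>j\<in>(UNIV::'b set). b)"
    by (intro sum_mono assms)
  from order_trans[OF norm_le_sum_abs2 this] show ?thesis by (simp add: mult.assoc)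
qed

lemma norm_le_of_nth_bound3:
  assumes "\<And>i j k. \<bar>x$i$j$k\<bar> \<le> b"
  shows "norm (x::real^'c::finite^'b::finite^'a::finite) \<le> real CARD('a) * real CARD('b) * real CARD('c) * b"
proof -
  have "(\<Sum>i\<in>UNIV. \<Sum>j\<in>UNIV. \<Sum>k\<in>UNIV. \<bar>x$i$j$k\<bar>) \<le> (\<Sum>i\<in>(UNIV::'a set). \<Sum>j\<in>(UNIV::'b set). \<Sum>k\<in>(UNIV::'c set). b)"
    by (intro sum_mono assms)
  from order_trans[OF norm_le_sum_abs3 this] show ?thesis by (simp add: mult.assoc)
qed

lemma abs_nth2_le_norm: "\<bar>x$i$j\<bar> \<le> norm (x::real^'b::finite^'a::finite)"
  by (meson component_le_norm_cart Finite_Cartesian_Product.norm_nth_le order_trans)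

lemma lipschitz_bound_bounded_linear:
  assumes "bounded_linear f" shows "\<exists>C>0. \<forall>x z. norm (f x - f z) \<le> C * norm (x - z)"
proof -
  obtain K where K: "K > 0" "\<And>x. norm (f x) \<le> norm x * K" using bounded_linear.pos_bounded[OF assms] by blast
  have "norm (f x - f z) \<le> K * norm (x - z)" for x z
    using K(2)[of "x - z"] linear_diff[OF bounded_linear.linear[OF assms]] by (simp add: mult.commute)
  then show ?thesis using K by blast
qed

lemma revision_flow_diff_bound:
  fixes a b :: "'v \<Rightarrow> real" and r s :: "'v \<Rightarrow> 'v \<Rightarrow> real"
  assumes Q: "finite Q" and u: "u \<in> Q" and A: "\<forall>v\<in>Q. \<bar>a v\<bar> \<le> A"
    and da: "\<forall>v\<in>Q. \<bar>a v - b v\<bar> \<le> da"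
    and dr: "\<forall>v\<in>Q. \<forall>w\<in>Q. \<bar>r v w - s v w\<bar> \<le> dr" and R: "\<forall>v\<in>Q. \<forall>w\<in>Q. \<bar>s v w\<bar> \<le> R"
  shows "\<bar>((\<Sum>v\<in>Q. a v * r v u) - a u * (\<Sum>v\<in>Q. r u v)) - ((\<Sum>v\<in>Q. b v * s v u) - b u * (\<Sum>v\<in>Q. s u v))\<bar>
         \<le> 2 * real (card Q) * (A * dr + da * R)"
proof -
  have term_diff: "\<bar>a v * r v' w - b v * s v' w\<bar> \<le> A * dr + da * R" if "v \<in> Q" "v' \<in> Q" "w \<in> Q" for v v' w
  proof -
    have "a v * r v' w - b v * s v' w = a v * (r v' w - s v' w) + (a v - b v) * s v' w" by (simp add: algebra_simps)
    then have "\<bar>a v * r v' w - b v * s v' w\<bar> \<le> \<bar>a v\<bar> * \<bar>r v' w - s v' w\<bar> + \<bar>a v - b v\<bar> * \<bar>s v' w\<bar>"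
      by (metis abs_mult abs_triangle_ineq)
    also have "\<dots> \<le> A * dr + da * R"
      using that A da dr R by (intro add_mono mult_mono) auto
    finally show ?thesis .
  qed
  have inflow: "\<bar>(\<Sum>v\<in>Q. a v * r v u) - (\<Sum>v\<in>Q. b v * s v u)\<bar> \<le> real (card Q) * (A * dr + da * R)"
  proof -
    have "\<bar>(\<Sum>v\<in>Q. a v * r v u) - (\<Sum>v\<in>Q. b v * s v u)\<bar> \<le> (\<Sum>v\<in>Q. \<bar>a v * r v u - b v * s v u\<bar>)"
      by (simp add: sum_subtractf[symmetric] sum_abs)
    also have "\<dots> \<le> (\<Sum>v\<in>Q. A * dr + da * R)" using term_diff u by (intro sum_mono) auto
    finally show ?thesis by simp
  qed
  have outflow: "\<bar>a u * (\<Sum>v\<in>Q. r u v) - b u * (\<Sum>v\<in>Q. s u v)\<bar> \<le> real (card Q) * (A * dr + da * R)"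
  proof -
    have "\<bar>a u * (\<Sum>v\<in>Q. r u v) - b u * (\<Sum>v\<in>Q. s u v)\<bar> \<le> (\<Sum>v\<in>Q. \<bar>a u * r u v - b u * s u v\<bar>)"
      by (simp add: sum_subtractf[symmetric] sum_distrib_left sum_abs)
    also have "\<dots> \<le> (\<Sum>v\<in>Q. A * dr + da * R)" using term_diff u by (intro sum_mono) auto
    finally show ?thesis by simp
  qed
  show ?thesis using inflow outflow by linarith
qed

section \<open>The population model\<close>

locale population_model =
  fixes Sset :: "'c::finite \<Rightarrow> 's::finite set"
    and Pset :: "'c \<Rightarrow> 'u::finite set"
    and Act :: "'c \<Rightarrow> 's \<Rightarrow> 'a set"
    and phi :: "'c \<Rightarrow> 's \<Rightarrow> 'a \<Rightarrow> 's \<Rightarrow> real"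
    and pol :: "'c \<Rightarrow> 'u \<Rightarrow> 's \<Rightarrow> 'a"
    and m :: "'c \<Rightarrow> real"
    and kappa :: "'c \<Rightarrow> real"
    and F :: "('c,'s,'u) pstate \<Rightarrow> real^'u^'c"
    and rho :: "'c \<Rightarrow> real^'u \<Rightarrow> real^'u \<Rightarrow> 'u \<Rightarrow> 'u \<Rightarrow> real"
  assumes Act_finite: "\<And>c s. s \<in> Sset c \<Longrightarrow> finite (Act c s)"
    and phi_nonneg: "\<And>c s a s'. s \<in> Sset c \<Longrightarrow> a \<in> Act c s \<Longrightarrow> s' \<in> Sset c \<Longrightarrow> phi c s a s' \<ge> 0"
    and phi_sum: "\<And>c s a. s \<in> Sset c \<Longrightarrow> a \<in> Act c s \<Longrightarrow> (\<Sum>s'\<in>Sset c. phi c s a s') = 1"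
    and pol_act: "\<And>c u s. u \<in> Pset c \<Longrightarrow> s \<in> Sset c \<Longrightarrow> pol c u s \<in> Act c s"
    and m_pos: "\<And>c. m c > 0"
    and kappa_ge: "\<And>c. kappa c \<ge> 1"
    and unique_rec: "\<And>c u. u \<in> Pset c \<Longrightarrow> \<exists>!K. recurrent_class Sset Act phi pol c u K"
    and unique_stat: "\<And>c u. u \<in> Pset c \<Longrightarrow> \<exists>!\<eta>. stationary Sset Act phi pol c u \<eta>"
    and F_C1: "\<exists>U F'. open U \<and> Xset Sset Pset m \<subseteq> U \<and> (\<forall>\<mu>\<in>U. (F has_derivative blinfun_apply (F' \<mu>)) (at \<mu>))
                 \<and> continuous_on U F'"
    and rho_lip: "\<exists>L. \<forall>c p y q z u v. (\<forall>w. w \<notin> Pset c \<longrightarrow> p$w = 0 \<and> y$w = 0 \<and> q$w = 0 \<and> z$w = 0)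
                 \<longrightarrow> (\<forall>w. y$w \<ge> 0 \<and> z$w \<ge> 0) \<longrightarrow> u \<in> Pset c \<longrightarrow> v \<in> Pset c
                 \<longrightarrow> \<bar>rho c p y u v - rho c q z u v\<bar> \<le> L * (norm (p - q) + norm (y - z))"
begin

abbreviation "et \<equiv> eta Sset Act phi pol"
abbreviation "X \<equiv> Xset Sset Pset m"
abbreviation "D \<equiv> Dx Pset m"
abbreviation "Bsk \<equiv> BSK Sset Pset et"
abbreviation "FF \<equiv> (\<lambda>x. F (Bsk x))"
abbreviation "rhoP c p y \<equiv> rho c (restrP Pset c p) (restrP Pset c y)"

definition aggregate :: "('c,'s,'u) pstate \<Rightarrow> real^'u^'c" where
  "aggregate \<mu> = (\<chi> c u. if u \<in> Pset c then (\<Sum>s\<in>Sset c. \<mu>$c$s$u) else 0)"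

text \<open>The reduced field with the payoff vector \<open>p\<close> as a free argument: (R) is
  \<open>rev_field (FF x) x\<close>, while the aggregate of (E) moves along \<open>rev_field (F \<mu>) x\<close>.\<close>

definition rev_field :: "real^'u^'c \<Rightarrow> real^'u^'c \<Rightarrow> real^'u^'c" where
  "rev_field p x = (\<chi> c u. if u \<in> Pset c then revflow Pset rho c (p$c) (x$c) (\<lambda>u'. x$c$u') u else 0)"

lemma aggP_eq_aggregate: "aggP Sset Pset \<mu> c = aggregate \<mu> $ c"
  unfolding aggP_def aggregate_def by simp

lemma gred_eq_rev_field: "gred Pset rho FF x = rev_field (FF x) x"
  unfolding gred_def rev_field_def by simp

lemma rev_field_nth: "rev_field p x $ c $ u = (if u \<in> Pset c then
   (\<Sum>v\<in>Pset c. x$c$v * rhoP c (p$c) (x$c) v u) - x$c$u * (\<Sum>v\<in>Pset c. rhoP c (p$c) (x$c) u v) else 0)"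
  unfolding rev_field_def revflow_def by simp

lemma eta_stationary: "u \<in> Pset c \<Longrightarrow> stationary Sset Act phi pol c u (et c u)"
  unfolding eta_def by (rule theI'[OF unique_stat])

lemma eta_eq_0: "u \<in> Pset c \<Longrightarrow> s \<notin> Sset c \<Longrightarrow> et c u s = 0"
  using eta_stationary unfolding stationary_def by blast

lemma eta_nonneg: assumes "u \<in> Pset c" shows "0 \<le> et c u s"
proof (cases "s \<in> Sset c")
  case True
  then show ?thesis using eta_stationary[OF assms] unfolding stationary_def by blast
qed (simp add: eta_eq_0[OF assms])

lemma eta_sum: "u \<in> Pset c \<Longrightarrow> (\<Sum>s\<in>Sset c. et c u s) = 1"
  using eta_stationary unfolding stationary_def by blast

lemma eta_fixed_point:
  "u \<in> Pset c \<Longrightarrow> s \<in> Sset c \<Longrightarrow> et c u s = (\<Sum>s'\<in>Sset c. phiu Act phi pol c u s s' * et c u s')"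
  using eta_stationary unfolding stationary_def by blast

lemma eta_sum_UNIV: "u \<in> Pset c \<Longrightarrow> (\<Sum>s\<in>UNIV. et c u s) = 1"
  by (simp add: eta_sum eta_eq_0 sum.mono_neutral_right[of UNIV "Sset c"])

lemma phiu_nonneg: "s \<in> Sset c \<Longrightarrow> s' \<in> Sset c \<Longrightarrow> 0 \<le> phiu Act phi pol c u s s'"
  unfolding phiu_def polprob_def by (auto intro!: sum_nonneg phi_nonneg)

lemma phiu_col_sum: "s' \<in> Sset c \<Longrightarrow> u \<in> Pset c \<Longrightarrow> (\<Sum>s\<in>Sset c. phiu Act phi pol c u s s') = 1"
proof -
  assume s': "s' \<in> Sset c" and u: "u \<in> Pset c"
  have "(\<Sum>s\<in>Sset c. phiu Act phi pol c u s s') = (\<Sum>a\<in>Act c s'. polprob pol c u s' a * (\<Sum>s\<in>Sset c. phi c s' a s))"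
    unfolding phiu_def by (subst sum.swap) (simp add: sum_distrib_left mult.commute)
  also have "\<dots> = (\<Sum>a\<in>Act c s'. polprob pol c u s' a)" using phi_sum[OF s'] by simp
  also have "\<dots> = 1" unfolding polprob_def using pol_act[OF u s'] Act_finite[OF s'] by (simp add: sum.delta)
  finally show ?thesis .
qed

lemma mem_X_iff: "\<mu> \<in> X \<longleftrightarrow> (\<forall>c. (\<forall>s u. \<mu>$c$s$u \<ge> 0) \<and> (\<forall>s u. (s \<notin> Sset c \<or> u \<notin> Pset c) \<longrightarrow> \<mu>$c$s$u = 0) \<and>
      (\<Sum>s\<in>Sset c. \<Sum>u\<in>Pset c. \<mu>$c$s$u) = m c)"
  unfolding Xset_def by simp

lemma mem_D_iff: "x \<in> D \<longleftrightarrow> (\<forall>c. (\<forall>u. x$c$u \<ge> 0) \<and> (\<forall>u. u \<notin> Pset c \<longrightarrow> x$c$u = 0) \<and> (\<Sum>u\<in>Pset c. x$c$u) = m c)"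
  unfolding Dx_def by simp

lemma aggregate_in_D: "\<mu> \<in> X \<Longrightarrow> aggregate \<mu> \<in> D"
  unfolding mem_D_iff mem_X_iff aggregate_def by (auto intro!: sum_nonneg simp: sum.swap[of _ "Sset _"])

lemma aggregate_Bsk: "x \<in> D \<Longrightarrow> aggregate (Bsk x) = x"
  unfolding aggregate_def BSK_def mem_D_iff
  by (auto simp: vec_eq_iff sum_distrib_left[symmetric] eta_sum)

lemma Bsk_nth: "Bsk x $ c $ s $ u = (if s \<in> Sset c \<and> u \<in> Pset c then x $ c $ u * et c u s else 0)"
  unfolding BSK_def by simp

lemma Bsk_in_X: assumes x: "x \<in> D" shows "Bsk x \<in> X"
proof -
  have "(\<Sum>s\<in>Sset c. \<Sum>u\<in>Pset c. x $ c $ u * et c u s) = (\<Sum>u\<in>Pset c. x $ c $ u * (\<Sum>s\<in>Sset c. et c u s))" for c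
    by (subst sum.swap) (simp add: sum_distrib_left)
  then show ?thesis
    using x by (auto simp: mem_X_iff mem_D_iff Bsk_nth eta_nonneg eta_sum cong: sum.cong)
qed

lemma bounded_linear_aggregate: "bounded_linear aggregate"
  by (rule linear_conv_bounded_linear[THEN iffD1], rule linearI)
     (auto simp: aggregate_def vec_eq_iff sum.distrib sum_distrib_left)

lemma bounded_linear_Bsk: "bounded_linear Bsk"
  by (rule linear_conv_bounded_linear[THEN iffD1], rule linearI)
     (auto simp: BSK_def vec_eq_iff algebra_simps)

definition m_max :: real where "m_max = Max (range m)"

lemma m_le_m_max: "m c \<le> m_max"
  unfolding m_max_def by (rule Max_ge) auto

lemma m_max_pos: "0 < m_max"
  using m_le_m_max[of undefined] m_pos[of undefined] by linarith

lemma X_nth_bounds: assumes mu: "\<mu> \<in> X" shows "0 \<le> \<mu>$c$s$u \<and> \<mu>$c$s$u \<le> m_max"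
proof -
  have nonneg: "\<forall>s u. 0 \<le> \<mu>$c$s$u" using mu unfolding mem_X_iff by blast
  show ?thesis
  proof (cases "s \<in> Sset c \<and> u \<in> Pset c")
    case True
    have "\<mu>$c$s$u \<le> (\<Sum>u\<in>Pset c. \<mu>$c$s$u)" using True nonneg by (intro member_le_sum) auto
    also have "\<dots> \<le> (\<Sum>s\<in>Sset c. \<Sum>u\<in>Pset c. \<mu>$c$s$u)" using True nonneg by (intro member_le_sum sum_nonneg) auto
    also have "\<dots> = m c" using mu unfolding mem_X_iff by blast
    finally show ?thesis using nonneg m_le_m_max[of c] by simp
  next
    case False
    then show ?thesis using mu m_max_pos unfolding mem_X_iff by auto
  qed
qed

lemma D_nth_bounds: assumes x: "x \<in> D" shows "0 \<le> x$c$u \<and> x$c$u \<le> m_max"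
proof -
  have nonneg: "\<forall>u. 0 \<le> x$c$u" using x unfolding mem_D_iff by blast
  show ?thesis
  proof (cases "u \<in> Pset c")
    case True
    have "x$c$u \<le> (\<Sum>u\<in>Pset c. x$c$u)" using True nonneg by (intro member_le_sum) auto
    also have "\<dots> = m c" using x unfolding mem_D_iff by blast
    finally show ?thesis using nonneg m_le_m_max[of c] by simp
  next
    case False
    then show ?thesis using x m_max_pos unfolding mem_D_iff by auto
  qed
qed

lemma bounded_X: "bounded X"
proof -
  have "norm \<mu> \<le> real CARD('c) * real CARD('s) * real CARD('u) * m_max" if "\<mu> \<in> X" for \<mu>
    by (rule norm_le_of_nth_bound3) (metis X_nth_bounds[OF that] abs_of_nonneg)
  then show ?thesis unfolding bounded_iff by blast
qed

lemma bounded_D: "bounded D"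
proof -
  have "norm x \<le> real CARD('c) * real CARD('u) * m_max" if "x \<in> D" for x
    by (rule norm_le_of_nth_bound2) (metis D_nth_bounds[OF that] abs_of_nonneg)
  then show ?thesis unfolding bounded_iff by blast
qed

lemma X_eq_Inter: "X = (\<Inter>c. \<Inter>s. \<Inter>u. {\<mu>. 0 \<le> \<mu>$c$s$u}) \<inter>
            (\<Inter>c. \<Inter>s. \<Inter>u\<in>{u. s \<notin> Sset c \<or> u \<notin> Pset c}. {\<mu>. \<mu>$c$s$u = 0}) \<inter>
            (\<Inter>c. {\<mu>. (\<Sum>s\<in>Sset c. \<Sum>u\<in>Pset c. \<mu>$c$s$u) = m c})"
  unfolding Xset_def by (auto split: if_splits)

lemma closed_X: "closed X"
  unfolding X_eq_Inter
  by (intro closed_Int closed_INT ballI) (auto intro!: closed_Collect_le closed_Collect_eq continuous_intros)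

lemma convex_X: "convex X"
  unfolding X_eq_Inter
  by (intro convex_Int convex_INT ballI)
     (auto simp: convex_def sum.distrib simp flip: sum_distrib_left distrib_right)

lemma closed_D: "closed D"
proof -
  have "D = (\<Inter>c. \<Inter>u. {x. 0 \<le> x$c$u}) \<inter> (\<Inter>c. \<Inter>u\<in>{u. u \<notin> Pset c}. {x. x$c$u = 0}) \<inter>
            (\<Inter>c. {x. (\<Sum>u\<in>Pset c. x$c$u) = m c})"
    unfolding Dx_def by (auto split: if_splits)
  moreover have "closed \<dots>"
    by (intro closed_Int closed_INT ballI) (auto intro!: closed_Collect_le closed_Collect_eq continuous_intros)
  ultimately show ?thesis by simp
qed

lemma compact_X: "compact X"
  using bounded_X closed_X by (simp add: compact_eq_bounded_closed)

lemma compact_D: "compact D"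
  using bounded_D closed_D by (simp add: compact_eq_bounded_closed)

lemma compact_subset_D: "closed S \<Longrightarrow> S \<subseteq> D \<Longrightarrow> compact S"
  using compact_D by (metis compact_Int_closed inf.absorb_iff2)

lemma D_norm_bound: "\<exists>DB. 0 \<le> DB \<and> (\<forall>x\<in>D. norm x \<le> DB)"
  using bounded_D unfolding bounded_iff by (meson norm_ge_zero order_trans)

lemma F_lipschitz: "\<exists>LF. 0 \<le> LF \<and> (\<forall>\<mu>\<in>X. \<forall>\<nu>\<in>X. norm (F \<mu> - F \<nu>) \<le> LF * norm (\<mu> - \<nu>))"
proof -
  obtain U F' where U: "open U" "X \<subseteq> U" and dF: "\<forall>\<mu>\<in>U. (F has_derivative blinfun_apply (F' \<mu>)) (at \<mu>)"
    and cF: "continuous_on U F'" using F_C1 by blast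
  have "compact (F' ` X)" using compact_X cF U(2) by (intro compact_continuous_image) (auto intro: continuous_on_subset)
  then obtain B where B: "\<forall>\<mu>\<in>X. norm (F' \<mu>) \<le> B"
    using compact_imp_bounded[of "F' ` X"] unfolding bounded_iff by auto
  have "norm (F \<mu> - F \<nu>) \<le> B * norm (\<mu> - \<nu>)" if "\<mu> \<in> X" "\<nu> \<in> X" for \<mu> \<nu>
    by (rule differentiable_bound[OF convex_X _ _ that])
       (use dF U B in \<open>auto intro: has_derivative_at_withinI simp: norm_blinfun.rep_eq[symmetric]\<close>)
  then have "norm (F \<mu> - F \<nu>) \<le> max 0 B * norm (\<mu> - \<nu>)" if "\<mu> \<in> X" "\<nu> \<in> X" for \<mu> \<nu>
    using that by (meson max.cobounded2 mult_right_mono norm_ge_zero order_trans)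
  then show ?thesis by (intro exI[of _ "max 0 B"]) auto
qed

lemma F_bounded: "\<exists>Fb. 0 \<le> Fb \<and> (\<forall>\<mu>\<in>X. norm (F \<mu>) \<le> Fb)"
proof -
  obtain U F' where "X \<subseteq> U" "\<forall>\<mu>\<in>U. (F has_derivative blinfun_apply (F' \<mu>)) (at \<mu>)" using F_C1 by blast
  then have "continuous_on X F"
    by (meson continuous_at_imp_continuous_on has_derivative_continuous subsetD)
  then have "bounded (F ` X)" using compact_X by (intro compact_imp_bounded compact_continuous_image)
  then show ?thesis unfolding bounded_iff by (meson image_eqI norm_ge_zero order_trans)
qed

lemma norm_restrP_le: "norm (restrP Pset c p) \<le> norm p"
  by (rule norm_le_componentwise_cart) (simp add: restrP_def)

lemma restrP_diff: "restrP Pset c p - restrP Pset c q = restrP Pset c (p - q)"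
  by (simp add: restrP_def vec_eq_iff)

lemma rhoP_lipschitz: "\<exists>L. 0 \<le> L \<and> (\<forall>c p y q z u v. (\<forall>w. y$w \<ge> 0 \<and> z$w \<ge> 0) \<longrightarrow> u \<in> Pset c \<longrightarrow> v \<in> Pset c
   \<longrightarrow> \<bar>rhoP c p y u v - rhoP c q z u v\<bar> \<le> L * (norm (p - q) + norm (y - z)))"
proof -
  obtain L where L: "\<forall>c p y q z u v. (\<forall>w. w \<notin> Pset c \<longrightarrow> p$w = 0 \<and> y$w = 0 \<and> q$w = 0 \<and> z$w = 0)
                 \<longrightarrow> (\<forall>w. y$w \<ge> 0 \<and> z$w \<ge> 0) \<longrightarrow> u \<in> Pset c \<longrightarrow> v \<in> Pset c
                 \<longrightarrow> \<bar>rho c p y u v - rho c q z u v\<bar> \<le> L * (norm (p - q) + norm (y - z))" using rho_lip by blast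
  have "\<bar>rhoP c p y u v - rhoP c q z u v\<bar> \<le> max 0 L * (norm (p - q) + norm (y - z))"
    if yz: "\<forall>w. y$w \<ge> 0 \<and> z$w \<ge> 0" and uv: "u \<in> Pset c" "v \<in> Pset c" for c p y q z u v
  proof -
    have "\<bar>rhoP c p y u v - rhoP c q z u v\<bar>
       \<le> L * (norm (restrP Pset c p - restrP Pset c q) + norm (restrP Pset c y - restrP Pset c z))"
      using L[rule_format, of c "restrP Pset c p" "restrP Pset c y" "restrP Pset c q" "restrP Pset c z" u v] yz uv
      by (simp add: restrP_def)
    also have "\<dots> \<le> max 0 L * (norm (restrP Pset c p - restrP Pset c q) + norm (restrP Pset c y - restrP Pset c z))"
      by (intro mult_right_mono) auto
    also have "\<dots> \<le> max 0 L * (norm (p - q) + norm (y - z))"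
      unfolding restrP_diff by (intro mult_left_mono add_mono norm_restrP_le) auto
    finally show ?thesis .
  qed
  then show ?thesis by (intro exI[of _ "max 0 L"]) auto
qed

lemma rhoP_bounded: "\<exists>R. 0 \<le> R \<and> (\<forall>c p y u v. norm p \<le> Fb \<longrightarrow> norm y \<le> Yb \<longrightarrow> (\<forall>w. y$w \<ge> 0)
   \<longrightarrow> u \<in> Pset c \<longrightarrow> v \<in> Pset c \<longrightarrow> \<bar>rhoP c p y u v\<bar> \<le> R)"
proof -
  obtain L where L: "0 \<le> L" and Lip: "\<forall>c p y q z u v. (\<forall>w. y$w \<ge> 0 \<and> z$w \<ge> 0) \<longrightarrow> u \<in> Pset c \<longrightarrow> v \<in> Pset c
   \<longrightarrow> \<bar>rhoP c p y u v - rhoP c q z u v\<bar> \<le> L * (norm (p - q) + norm (y - z))"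
    using rhoP_lipschitz by blast
  define R0 where "R0 = Max (range (\<lambda>(c,u,v). \<bar>rhoP c 0 0 u v\<bar>))"
  have R0: "\<bar>rhoP c 0 0 u v\<bar> \<le> R0" for c u v
    unfolding R0_def by (rule Max_ge) (auto intro!: image_eqI[of _ _ "(c,u,v)"])
  have "\<bar>rhoP c p y u v\<bar> \<le> R0 + L * (max 0 Fb + max 0 Yb)"
    if "norm p \<le> Fb" "norm y \<le> Yb" "\<forall>w. y$w \<ge> 0" "u \<in> Pset c" "v \<in> Pset c" for c p y u v
  proof -
    have "\<bar>rhoP c p y u v - rhoP c 0 0 u v\<bar> \<le> L * (norm (p - 0) + norm (y - 0))"
      using Lip[rule_format, of y 0 u c v p 0] that by simp
    also have "\<dots> \<le> L * (max 0 Fb + max 0 Yb)" using that L by (intro mult_left_mono add_mono) auto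
    finally show ?thesis using R0[of c u v] by linarith
  qed
  moreover have "0 \<le> R0 + L * (max 0 Fb + max 0 Yb)" using R0[of undefined undefined undefined] L by simp
  ultimately show ?thesis by blast
qed

lemma rev_field_lipschitz: assumes Fb: "0 \<le> Fb"
  shows "\<exists>LH. 0 \<le> LH \<and> (\<forall>x\<in>D. \<forall>z\<in>D. \<forall>p q. norm p \<le> Fb \<longrightarrow> norm q \<le> Fb \<longrightarrow>
           norm (rev_field p x - rev_field q z) \<le> LH * (norm (p - q) + norm (x - z)))"
proof -
  obtain DB where DB: "0 \<le> DB" "\<forall>x\<in>D. norm x \<le> DB" using D_norm_bound by blast
  obtain L where L: "0 \<le> L" and Lip: "\<forall>c p y q z u v. (\<forall>w. y$w \<ge> 0 \<and> z$w \<ge> 0) \<longrightarrow> u \<in> Pset c \<longrightarrow> v \<in> Pset c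
   \<longrightarrow> \<bar>rhoP c p y u v - rhoP c q z u v\<bar> \<le> L * (norm (p - q) + norm (y - z))"
    using rhoP_lipschitz by blast
  obtain R where R: "0 \<le> R" "\<forall>c p y u v. norm p \<le> Fb \<longrightarrow> norm y \<le> DB \<longrightarrow> (\<forall>w. y$w \<ge> 0)
   \<longrightarrow> u \<in> Pset c \<longrightarrow> v \<in> Pset c \<longrightarrow> \<bar>rhoP c p y u v\<bar> \<le> R" using rhoP_bounded by blast
  define K where "K = 2 * real CARD('u) * (m_max * L + R)"
  have K: "0 \<le> K" unfolding K_def using m_max_pos L R by simp
  have nth_bound: "\<bar>(rev_field p x - rev_field q z) $ c $ u\<bar> \<le> K * (norm (p - q) + norm (x - z))"
    if x: "x \<in> D" and z: "z \<in> D" and p: "norm p \<le> Fb" and q: "norm q \<le> Fb" for x z p q c u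
  proof (cases "u \<in> Pset c")
    case False
    then show ?thesis using K by (simp add: rev_field_nth)
  next
    case True
    have nonneg: "\<forall>w. 0 \<le> x$c$w" "\<forall>w. 0 \<le> z$c$w" using x z unfolding mem_D_iff by auto
    have norms: "norm (q$c) \<le> Fb" "norm (z$c) \<le> DB"
      using q DB z Finite_Cartesian_Product.norm_nth_le order_trans by blast+
    have rho_diff: "\<bar>rhoP c (p$c) (x$c) v w - rhoP c (q$c) (z$c) v w\<bar> \<le> L * (norm (p - q) + norm (x - z))"
      if "v \<in> Pset c" "w \<in> Pset c" for v w
    proof -
      have "\<bar>rhoP c (p$c) (x$c) v w - rhoP c (q$c) (z$c) v w\<bar> \<le> L * (norm (p$c - q$c) + norm (x$c - z$c))"
        using Lip nonneg that by blast
      also have "\<dots> \<le> L * (norm (p - q) + norm (x - z))"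
        using L Finite_Cartesian_Product.norm_nth_le[of "p - q" c] Finite_Cartesian_Product.norm_nth_le[of "x - z" c]
        by (intro mult_left_mono add_mono) auto
      finally show ?thesis .
    qed
    have "\<bar>(rev_field p x - rev_field q z) $ c $ u\<bar>
        \<le> 2 * real (card (Pset c)) * (m_max * (L * (norm (p - q) + norm (x - z))) + norm (x - z) * R)"
      unfolding vector_minus_component rev_field_nth if_P[OF True]
      by (rule revision_flow_diff_bound[OF finite True])
         (use D_nth_bounds[OF x] abs_nth2_le_norm[of "x - z"] rho_diff R norms nonneg in auto)
    also have "\<dots> \<le> 2 * real CARD('u) * (m_max * (L * (norm (p - q) + norm (x - z))) + norm (x - z) * R)"
      using m_max_pos L R card_mono[of UNIV "Pset c"] by (intro mult_right_mono) auto
    also have "\<dots> \<le> K * (norm (p - q) + norm (x - z))"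
      unfolding K_def using R m_max_pos L by (simp add: algebra_simps mult_left_mono)
    finally show ?thesis .
  qed
  have "norm (rev_field p x - rev_field q z) \<le> (real CARD('c) * real CARD('u) * K) * (norm (p - q) + norm (x - z))"
    if "x \<in> D" "z \<in> D" "norm p \<le> Fb" "norm q \<le> Fb" for x z p q
    using norm_le_of_nth_bound2[OF nth_bound[OF that]] by (simp add: algebra_simps)
  moreover have "0 \<le> real CARD('c) * real CARD('u) * K" using K by simp
  ultimately show ?thesis by blast
qed

abbreviation "solution \<epsilon> \<mu> \<equiv> is_solution Sset Pset m Act phi pol rho F kappa \<epsilon> \<mu>"

abbreviation "Ef \<epsilon> \<equiv> Efield Sset Pset Act phi pol rho F kappa \<epsilon>"

definition state_rev :: "('c,'s,'u) pstate \<Rightarrow> 'c \<Rightarrow> 's \<Rightarrow> 'u \<Rightarrow> real" where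
  "state_rev \<mu> c s u = revflow Pset rho c (F \<mu> $ c) (aggregate \<mu> $ c) (\<lambda>u'. \<mu>$c$s$u') u"

lemma Efield_nth: "Ef \<epsilon> \<mu> $ c $ s $ u = (if s \<in> Sset c \<and> u \<in> Pset c then
    (kappa c / \<epsilon>) * (\<Sum>s'\<in>Sset c. phiu Act phi pol c u s s' * \<mu>$c$s'$u) - (kappa c / \<epsilon>) * \<mu>$c$s$u + state_rev \<mu> c s u else 0)"
proof -
  have "(\<Sum>s'\<in>Sset c. \<Sum>a'\<in>Act c s'. phi c s' a' s * polprob pol c u s' a' * \<mu>$c$s'$u)
      = (\<Sum>s'\<in>Sset c. phiu Act phi pol c u s s' * \<mu>$c$s'$u)"
    unfolding phiu_def by (simp add: sum_distrib_right)
  then show ?thesis unfolding Efield_def state_rev_def aggP_eq_aggregate by simp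
qed

lemma revflow_sum: "(\<Sum>s\<in>S. revflow Pset rho c p y (\<lambda>u'. f s u') u) = revflow Pset rho c p y (\<lambda>u'. \<Sum>s\<in>S. f s u') u"
  unfolding revflow_def
  by (simp add: sum_subtractf sum_distrib_right sum.swap[of _ S])

lemma revflow_cong: "(\<And>u'. u' \<in> Pset c \<Longrightarrow> a u' = b u') \<Longrightarrow> u \<in> Pset c \<Longrightarrow>
    revflow Pset rho c p y a u = revflow Pset rho c p y b u"
  unfolding revflow_def by simp

lemma sum_phiu_mu: "u \<in> Pset c \<Longrightarrow> (\<Sum>s\<in>Sset c. \<Sum>s'\<in>Sset c. phiu Act phi pol c u s s' * \<mu>$c$s'$u) = (\<Sum>s'\<in>Sset c. \<mu>$c$s'$u)"
  by (subst sum.swap) (simp add: sum_distrib_right[symmetric] phiu_col_sum)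

lemma sum_Efield: "u \<in> Pset c \<Longrightarrow> (\<Sum>s\<in>Sset c. Ef \<epsilon> \<mu> $ c $ s $ u) = (\<Sum>s\<in>Sset c. state_rev \<mu> c s u)"
proof -
  assume u: "u \<in> Pset c"
  have "(\<Sum>s\<in>Sset c. Ef \<epsilon> \<mu> $ c $ s $ u) = (\<Sum>s\<in>Sset c.
    (kappa c / \<epsilon>) * (\<Sum>s'\<in>Sset c. phiu Act phi pol c u s s' * \<mu>$c$s'$u) - (kappa c / \<epsilon>) * \<mu>$c$s$u + state_rev \<mu> c s u)"
    using u by (intro sum.cong) (auto simp: Efield_nth)
  also have "\<dots> = (kappa c / \<epsilon>) * (\<Sum>s\<in>Sset c. \<Sum>s'\<in>Sset c. phiu Act phi pol c u s s' * \<mu>$c$s'$u)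
      - (kappa c / \<epsilon>) * (\<Sum>s\<in>Sset c. \<mu>$c$s$u) + (\<Sum>s\<in>Sset c. state_rev \<mu> c s u)"
    by (simp add: sum.distrib sum_subtractf sum_distrib_left)
  also have "\<dots> = (\<Sum>s\<in>Sset c. state_rev \<mu> c s u)" using sum_phiu_mu[OF u] by simp
  finally show ?thesis .
qed

lemma aggregate_Efield: "aggregate (Ef \<epsilon> \<mu>) = rev_field (F \<mu>) (aggregate \<mu>)"
proof -
  have "aggregate (Ef \<epsilon> \<mu>) $ c $ u = rev_field (F \<mu>) (aggregate \<mu>) $ c $ u" for c u
  proof (cases "u \<in> Pset c")
    case True
    have "aggregate (Ef \<epsilon> \<mu>) $ c $ u = (\<Sum>s\<in>Sset c. state_rev \<mu> c s u)" using True by (simp add: aggregate_def sum_Efield)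
    also have "\<dots> = revflow Pset rho c (F \<mu> $ c) (aggregate \<mu> $ c) (\<lambda>u'. \<Sum>s\<in>Sset c. \<mu>$c$s$u') u"
      unfolding state_rev_def by (rule revflow_sum)
    also have "\<dots> = revflow Pset rho c (F \<mu> $ c) (aggregate \<mu> $ c) (\<lambda>u'. aggregate \<mu> $ c $ u') u"
      using True by (intro revflow_cong) (auto simp: aggregate_def)
    also have "\<dots> = rev_field (F \<mu>) (aggregate \<mu>) $ c $ u" using True by (simp add: rev_field_def)
    finally show ?thesis .
  next
    case False
    then show ?thesis by (simp add: aggregate_def rev_field_def)
  qed
  then show ?thesis by (simp add: vec_eq_iff)
qed

lemma solution_in_X: "solution \<epsilon> \<mu> \<Longrightarrow> t \<ge> 0 \<Longrightarrow> \<mu> t \<in> X"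
  unfolding is_solution_def by blast

lemma solution_deriv: "solution \<epsilon> \<mu> \<Longrightarrow> t \<ge> 0 \<Longrightarrow>
    (\<mu> has_vector_derivative Ef \<epsilon> (\<mu> t)) (at t within {0..})"
  unfolding is_solution_def by blast

lemma aggregate_solution_deriv: "solution \<epsilon> \<mu> \<Longrightarrow> t \<ge> 0 \<Longrightarrow>
    ((\<lambda>t. aggregate (\<mu> t)) has_vector_derivative rev_field (F (\<mu> t)) (aggregate (\<mu> t))) (at t within {0..})"
  using bounded_linear.has_vector_derivative[OF bounded_linear_aggregate solution_deriv] aggregate_Efield by metis

text \<open>Columns outside \<open>Sset c\<close> are filled with \<open>\<eta>^{c,u}\<close>, so that the matrix is stochastic on the whole
  type \<open>'s\<close> and every state can reach the recurrent class.\<close>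

definition kernel_mat :: "'c \<Rightarrow> 'u \<Rightarrow> 's sqmat" where
  "kernel_mat c u = sqmat_of (\<chi> a b. if b \<in> Sset c then (if a \<in> Sset c then phiu Act phi pol c u a b else 0) else et c u a)"

definition fast_dev :: "('c,'s,'u) pstate \<Rightarrow> 'c \<Rightarrow> 'u \<Rightarrow> real^'s" where
  "fast_dev \<mu> c u = (\<chi> s. \<mu>$c$s$u - aggregate \<mu> $ c $ u * et c u s)"

definition state_rev_in :: "('c,'s,'u) pstate \<Rightarrow> 'c \<Rightarrow> 'u \<Rightarrow> 's \<Rightarrow> real" where
  "state_rev_in \<mu> c u s = (if s \<in> Sset c then state_rev \<mu> c s u else 0)"

definition dev_forcing :: "('c,'s,'u) pstate \<Rightarrow> 'c \<Rightarrow> 'u \<Rightarrow> real^'s" where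
  "dev_forcing \<mu> c u = (\<chi> s. state_rev_in \<mu> c u s - (\<Sum>s'\<in>UNIV. state_rev_in \<mu> c u s') * et c u s)"

lemma entry_kernel_mat: "entry a b (kernel_mat c u) = (if b \<in> Sset c then (if a \<in> Sset c then phiu Act phi pol c u a b else 0) else et c u a)"
  unfolding entry_def kernel_mat_def by (simp add: sqmat_of_inverse)

lemma kernel_mat_stochastic: assumes u: "u \<in> Pset c" shows "stochastic (kernel_mat c u)"
  unfolding stochastic_def
proof (intro conjI allI)
  fix a b
  show "0 \<le> entry a b (kernel_mat c u)" by (auto simp: entry_kernel_mat phiu_nonneg eta_nonneg[OF u])
next
  fix b
  show "(\<Sum>a\<in>UNIV. entry a b (kernel_mat c u)) = 1"
  proof (cases "b \<in> Sset c")
    case True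
    have "(\<Sum>a\<in>UNIV. entry a b (kernel_mat c u)) = (\<Sum>a\<in>UNIV. if a \<in> Sset c then phiu Act phi pol c u a b else 0)"
      using True by (simp add: entry_kernel_mat)
    also have "\<dots> = (\<Sum>a\<in>Sset c. phiu Act phi pol c u a b)" by (simp add: sum.If_cases)
    also have "\<dots> = 1" by (rule phiu_col_sum[OF True u])
    finally show ?thesis .
  next
    case False
    then show ?thesis by (simp add: entry_kernel_mat eta_sum_UNIV[OF u])
  qed
qed

lemma fast_dev_outside: "\<mu> \<in> X \<Longrightarrow> u \<in> Pset c \<Longrightarrow> b \<notin> Sset c \<Longrightarrow> fast_dev \<mu> c u $ b = 0"
  unfolding fast_dev_def using eta_eq_0 by (simp add: mem_X_iff)

lemma kernel_mat_fast_dev: assumes mu: "\<mu> \<in> X" and u: "u \<in> Pset c"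
  shows "(\<Sum>b\<in>UNIV. entry s b (kernel_mat c u) * fast_dev \<mu> c u $ b)
       = (if s \<in> Sset c then (\<Sum>b\<in>Sset c. phiu Act phi pol c u s b * \<mu>$c$b$u) - aggregate \<mu> $ c $ u * et c u s else 0)"
proof -
  have "(\<Sum>b\<in>UNIV. entry s b (kernel_mat c u) * fast_dev \<mu> c u $ b) = (\<Sum>b\<in>Sset c. entry s b (kernel_mat c u) * fast_dev \<mu> c u $ b)"
    by (rule sum.mono_neutral_right) (auto simp: fast_dev_outside[OF mu u])
  also have "\<dots> = (\<Sum>b\<in>Sset c. (if s \<in> Sset c then phiu Act phi pol c u s b else 0) * fast_dev \<mu> c u $ b)"
    by (intro sum.cong) (auto simp: entry_kernel_mat)
  also have "\<dots> = (if s \<in> Sset c then (\<Sum>b\<in>Sset c. phiu Act phi pol c u s b * \<mu>$c$b$u) - aggregate \<mu> $ c $ u * et c u s else 0)"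
  proof (cases "s \<in> Sset c")
    case True
    have "(\<Sum>b\<in>Sset c. phiu Act phi pol c u s b * fast_dev \<mu> c u $ b)
        = (\<Sum>b\<in>Sset c. phiu Act phi pol c u s b * \<mu>$c$b$u) - aggregate \<mu> $ c $ u * (\<Sum>b\<in>Sset c. phiu Act phi pol c u s b * et c u b)"
      unfolding fast_dev_def by (simp add: algebra_simps sum_subtractf sum_distrib_left)
    also have "\<dots> = (\<Sum>b\<in>Sset c. phiu Act phi pol c u s b * \<mu>$c$b$u) - aggregate \<mu> $ c $ u * et c u s"
      using eta_fixed_point[OF u True] by simp
    finally show ?thesis using True by simp
  qed simp
  finally show ?thesis .
qed

lemma fast_dev_Efield: assumes mu: "\<mu> \<in> X" and u: "u \<in> Pset c"
  shows "fast_dev (Ef \<epsilon> \<mu>) c u = (kappa c / \<epsilon>) *\<^sub>R (mat_of (kernel_mat c u - 1) *v fast_dev \<mu> c u) + dev_forcing \<mu> c u"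
proof -
  have aggE: "aggregate (Ef \<epsilon> \<mu>) $ c $ u = (\<Sum>s'\<in>UNIV. state_rev_in \<mu> c u s')"
    using u by (simp add: aggregate_def sum_Efield state_rev_in_def sum.If_cases)
  have "fast_dev (Ef \<epsilon> \<mu>) c u $ s = ((kappa c / \<epsilon>) *\<^sub>R (mat_of (kernel_mat c u - 1) *v fast_dev \<mu> c u) + dev_forcing \<mu> c u) $ s" for s
  proof -
    have mv: "(mat_of (kernel_mat c u - 1) *v fast_dev \<mu> c u) $ s = (\<Sum>b\<in>UNIV. entry s b (kernel_mat c u) * fast_dev \<mu> c u $ b) - fast_dev \<mu> c u $ s"
      unfolding mat_of_vec_nth by (simp add: entry_one algebra_simps sum_subtractf if_distrib[of "\<lambda>x. x * _"] sum.delta)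
    show ?thesis
    proof (cases "s \<in> Sset c")
      case True
      show ?thesis
        unfolding vector_add_component vector_scaleR_component mv kernel_mat_fast_dev[OF mu u]
        using True u aggE by (simp add: fast_dev_def dev_forcing_def Efield_nth state_rev_in_def algebra_simps)
    next
      case False
      show ?thesis
        unfolding vector_add_component vector_scaleR_component mv kernel_mat_fast_dev[OF mu u]
        using False u aggE mu by (simp add: fast_dev_def dev_forcing_def Efield_nth state_rev_in_def eta_eq_0 mem_X_iff)
    qed
  qed
  then show ?thesis by (simp add: vec_eq_iff)
qed

lemma reach_imp_entry_pos: assumes u: "u \<in> Pset c" and r: "(b, z) \<in> reach Sset Act phi pol c u"
  shows "\<exists>n. 0 < entry z b (kernel_mat c u ^ n)"
  using r unfolding reach_def
proof (induction rule: rtrancl_induct)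
  case base
  show ?case by (intro exI[of _ 0]) (simp add: entry_one)
next
  case (step y z)
  then obtain n where n: "0 < entry y b (kernel_mat c u ^ n)" by blast
  from step.hyps(2) have yz: "y \<in> Sset c" "z \<in> Sset c" "0 < phiu Act phi pol c u z y" by auto
  have "0 < entry z b (kernel_mat c u * kernel_mat c u ^ n)"
    by (rule stochastic_entry_mult_pos[OF kernel_mat_stochastic[OF u] stochastic_power[OF kernel_mat_stochastic[OF u]] _ n]) (use yz in \<open>simp add: entry_kernel_mat\<close>)
  then show ?case by (intro exI[of _ "Suc n"]) simp
qed

lemma reach_in_S: "(x, y) \<in> reach Sset Act phi pol c u \<Longrightarrow> x \<in> Sset c \<Longrightarrow> y \<in> Sset c"
  unfolding reach_def by (induction rule: rtrancl_induct) auto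

lemma reach_trans: "(x, y) \<in> reach Sset Act phi pol c u \<Longrightarrow> (y, z) \<in> reach Sset Act phi pol c u \<Longrightarrow> (x, z) \<in> reach Sset Act phi pol c u"
  unfolding reach_def by (rule rtrancl_trans)

lemma reach_refl: "(x, x) \<in> reach Sset Act phi pol c u"
  unfolding reach_def by simp

text \<open>A state reachable from \<open>b\<close> whose reachable set is smallest generates a recurrent class,
  which by uniqueness is \<open>K\<close>.\<close>

lemma reach_recurrent_class: assumes u: "u \<in> Pset c" and K: "recurrent_class Sset Act phi pol c u K" and b: "b \<in> Sset c"
  shows "\<exists>y\<in>K. (b, y) \<in> reach Sset Act phi pol c u"
proof -
  let ?R = "reach Sset Act phi pol c u"
  define Rs where "Rs x = {y. (x, y) \<in> ?R}" for x
  have RsS: "Rs x \<subseteq> Sset c" if "x \<in> Sset c" for x using reach_in_S that unfolding Rs_def by blast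
  have finRs: "finite (Rs x)" for x by simp
  have "b \<in> Rs b" unfolding Rs_def using reach_refl by blast
  define mn where "mn = Min ((\<lambda>y. card (Rs y)) ` Rs b)"
  have "mn \<in> (\<lambda>y. card (Rs y)) ` Rs b" unfolding mn_def using \<open>b \<in> Rs b\<close> by (intro Min_in) auto
  then obtain x where x: "x \<in> Rs b" "card (Rs x) = mn" by auto
  have xmin: "card (Rs x) \<le> card (Rs y)" if "y \<in> Rs b" for y
    unfolding x(2) mn_def using that by (intro Min_le) auto
  have xS: "x \<in> Sset c" using x(1) RsS[OF b] by auto
  have sub: "Rs y \<subseteq> Rs x" if "y \<in> Rs x" for y using that reach_trans unfolding Rs_def by blast
  have eq: "Rs y = Rs x" if "y \<in> Rs x" for y
  proof -
    have "y \<in> Rs b" using that x(1) reach_trans unfolding Rs_def by blast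
    then have "card (Rs x) \<le> card (Rs y)" by (rule xmin)
    moreover have "card (Rs y) \<le> card (Rs x)" using card_mono[OF finRs sub[OF that]] .
    ultimately have "card (Rs y) = card (Rs x)" by simp
    then show ?thesis using sub[OF that] by (intro card_subset_eq) auto
  qed
  have "recurrent_class Sset Act phi pol c u (Rs x)"
    unfolding recurrent_class_def
  proof (intro conjI ballI allI impI)
    show "Rs x \<noteq> {}" using reach_refl unfolding Rs_def by blast
    show "Rs x \<subseteq> Sset c" by (rule RsS[OF xS])
    fix y assume y: "y \<in> Rs x"
    {
      fix z assume "z \<in> Rs x"
      then show "(y, z) \<in> ?R" using eq[OF y] unfolding Rs_def by blast
    }
    {
      fix z assume "(y, z) \<in> ?R"
      then show "z \<in> Rs x" using y reach_trans unfolding Rs_def by blast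
    }
  qed
  then have "Rs x = K" using unique_rec[OF u] K by blast
  moreover obtain y where "y \<in> K" using K unfolding recurrent_class_def by blast
  ultimately show ?thesis using x(1) reach_trans unfolding Rs_def by blast
qed

lemma kernel_mat_accessible: assumes u: "u \<in> Pset c" shows "\<exists>s0. \<forall>b. \<exists>n. 0 < entry s0 b (kernel_mat c u ^ n)"
proof -
  obtain K where K: "recurrent_class Sset Act phi pol c u K" using unique_rec[OF u] by blast
  then obtain s0 where s0: "s0 \<in> K" unfolding recurrent_class_def by blast
  have K_comm: "\<forall>x\<in>K. \<forall>y\<in>K. (x, y) \<in> reach Sset Act phi pol c u" using K unfolding recurrent_class_def by blast
  have inS: "\<exists>n. 0 < entry s0 b (kernel_mat c u ^ n)" if b: "b \<in> Sset c" for b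
  proof -
    obtain y where y: "y \<in> K" "(b, y) \<in> reach Sset Act phi pol c u" using reach_recurrent_class[OF u K b] by blast
    then have "(b, s0) \<in> reach Sset Act phi pol c u" using K_comm s0 reach_trans by blast
    then show ?thesis by (rule reach_imp_entry_pos[OF u])
  qed
  have "\<exists>n. 0 < entry s0 b (kernel_mat c u ^ n)" for b
  proof (cases "b \<in> Sset c")
    case True then show ?thesis by (rule inS)
  next
    case False
    obtain a0 where a0: "a0 \<in> Sset c" "0 < et c u a0"
    proof -
      have "\<not> (\<forall>a\<in>Sset c. et c u a \<le> 0)"
      proof
        assume "\<forall>a\<in>Sset c. et c u a \<le> 0"
        then have "(\<Sum>a\<in>Sset c. et c u a) \<le> 0" by (simp add: sum_nonpos)
        then show False using eta_sum[OF u] by simp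
      qed
      then show ?thesis using that by force
    qed
    obtain n where n: "0 < entry s0 a0 (kernel_mat c u ^ n)" using inS[OF a0(1)] by blast
    have "0 < entry s0 b (kernel_mat c u ^ n * kernel_mat c u)"
      by (rule stochastic_entry_mult_pos[OF stochastic_power[OF kernel_mat_stochastic[OF u]] kernel_mat_stochastic[OF u] n]) (use False a0 in \<open>simp add: entry_kernel_mat\<close>)
    then have "0 < entry s0 b (kernel_mat c u ^ Suc n)" by (simp only: power_Suc2)
    then show ?thesis by blast
  qed
  then show ?thesis by blast
qed

lemma accessible_chain_kernel_mat: "u \<in> Pset c \<Longrightarrow> accessible_chain (kernel_mat c u)"
  by unfold_locales (auto intro: kernel_mat_stochastic kernel_mat_accessible)

lemma state_rev_bounded: "\<exists>RV. 0 \<le> RV \<and> (\<forall>\<mu>\<in>X. \<forall>c s u. u \<in> Pset c \<longrightarrow> \<bar>state_rev \<mu> c s u\<bar> \<le> RV)"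
proof -
  obtain Fb where Fb: "0 \<le> Fb" "\<forall>\<mu>\<in>X. norm (F \<mu>) \<le> Fb" using F_bounded by blast
  obtain DB where DB: "0 \<le> DB" "\<forall>x\<in>D. norm x \<le> DB" using D_norm_bound by blast
  obtain R where R: "0 \<le> R" "\<forall>c p y u v. norm p \<le> Fb \<longrightarrow> norm y \<le> DB \<longrightarrow> (\<forall>w. y$w \<ge> 0)
     \<longrightarrow> u \<in> Pset c \<longrightarrow> v \<in> Pset c \<longrightarrow> \<bar>rhoP c p y u v\<bar> \<le> R" using rhoP_bounded by blast
  have "\<bar>state_rev \<mu> c s u\<bar> \<le> 2 * real CARD('u) * (m_max * R)" if mu: "\<mu> \<in> X" and u: "u \<in> Pset c" for \<mu> c s u
  proof -
    let ?r = "rhoP c (F \<mu> $ c) (aggregate \<mu> $ c)"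
    have x: "aggregate \<mu> \<in> D" by (rule aggregate_in_D[OF mu])
    have rate: "\<bar>?r v w\<bar> \<le> R" if "v \<in> Pset c" "w \<in> Pset c" for v w
    proof -
      have "norm (F \<mu> $ c) \<le> Fb" "norm (aggregate \<mu> $ c) \<le> DB"
        using Fb DB mu x Finite_Cartesian_Product.norm_nth_le order_trans by blast+
      then show ?thesis using R x that unfolding mem_D_iff by blast
    qed
    have "\<bar>state_rev \<mu> c s u\<bar> = \<bar>((\<Sum>v\<in>Pset c. \<mu>$c$s$v * ?r v u) - \<mu>$c$s$u * (\<Sum>v\<in>Pset c. ?r u v))
        - ((\<Sum>v\<in>Pset c. 0 * 0) - 0 * (\<Sum>v\<in>Pset c. 0::real))\<bar>"
      unfolding state_rev_def revflow_def by simp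
    also have "\<dots> \<le> 2 * real (card (Pset c)) * (m_max * R + m_max * 0)"
      by (rule revision_flow_diff_bound[OF finite u]) (use X_nth_bounds[OF mu] rate in auto)
    also have "\<dots> \<le> 2 * real CARD('u) * (m_max * R)"
      using card_mono[of UNIV "Pset c"] m_max_pos R by (simp add: mult_right_mono)
    finally show ?thesis .
  qed
  then show ?thesis using m_max_pos R by (intro exI[of _ "2 * real CARD('u) * (m_max * R)"]) auto
qed

lemma dev_forcing_bounds: assumes mu: "\<mu> \<in> X" and u: "u \<in> Pset c" and RV: "\<forall>s. \<bar>state_rev \<mu> c s u\<bar> \<le> RV"
  shows "vec_sum (dev_forcing \<mu> c u) = 0" "norm1 (dev_forcing \<mu> c u) \<le> 2 * real CARD('s) * RV"
proof -
  show "vec_sum (dev_forcing \<mu> c u) = 0"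
    unfolding vec_sum_def dev_forcing_def using eta_sum_UNIV[OF u]
    by (simp add: sum_subtractf sum_distrib_left[symmetric])
  have state_rev_in: "\<bar>state_rev_in \<mu> c u s\<bar> \<le> RV" for s using RV
    by (simp add: state_rev_in_def) (metis abs_ge_zero order_trans)
  have "norm1 (dev_forcing \<mu> c u) \<le> (\<Sum>s\<in>UNIV. \<bar>state_rev_in \<mu> c u s\<bar> + \<bar>\<Sum>s'\<in>UNIV. state_rev_in \<mu> c u s'\<bar> * et c u s)"
    unfolding norm1_def dev_forcing_def using eta_nonneg[OF u]
    by (intro sum_mono) (simp add: abs_mult order_trans[OF abs_triangle_ineq4])
  also have "\<dots> = (\<Sum>s\<in>UNIV. \<bar>state_rev_in \<mu> c u s\<bar>) + \<bar>\<Sum>s'\<in>UNIV. state_rev_in \<mu> c u s'\<bar>"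
    using eta_sum_UNIV[OF u] by (simp add: sum.distrib sum_distrib_left[symmetric])
  also have "\<dots> \<le> (\<Sum>s\<in>UNIV. \<bar>state_rev_in \<mu> c u s\<bar>) + (\<Sum>s\<in>UNIV. \<bar>state_rev_in \<mu> c u s\<bar>)"
    by (simp add: sum_abs)
  also have "\<dots> \<le> 2 * real CARD('s) * RV"
    using sum_mono[of UNIV "\<lambda>s. \<bar>state_rev_in \<mu> c u s\<bar>" "\<lambda>_. RV", OF state_rev_in] by simp
  finally show "norm1 (dev_forcing \<mu> c u) \<le> 2 * real CARD('s) * RV" .
qed

lemma fast_dev_bounds: assumes mu: "\<mu> \<in> X" and u: "u \<in> Pset c"
  shows "vec_sum (fast_dev \<mu> c u) = 0" "norm1 (fast_dev \<mu> c u) \<le> 2 * m_max"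
proof -
  have sumS: "(\<Sum>s\<in>UNIV. \<mu>$c$s$u) = aggregate \<mu> $ c $ u"
    using u mu unfolding aggregate_def mem_X_iff by (simp add: sum.mono_neutral_right[of UNIV "Sset c"])
  show "vec_sum (fast_dev \<mu> c u) = 0"
    unfolding vec_sum_def fast_dev_def using eta_sum_UNIV[OF u] sumS
    by (simp add: sum_subtractf sum_distrib_left[symmetric])
  have x0: "0 \<le> aggregate \<mu> $ c $ u" "aggregate \<mu> $ c $ u \<le> m_max" using D_nth_bounds[OF aggregate_in_D[OF mu], of c u] m_le_m_max[of c] by auto
  have "norm1 (fast_dev \<mu> c u) \<le> (\<Sum>s\<in>UNIV. \<mu>$c$s$u + aggregate \<mu> $ c $ u * et c u s)"
    unfolding norm1_def fast_dev_def using X_nth_bounds[OF mu] eta_nonneg[OF u] x0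
    by (intro sum_mono) (simp add: abs_le_iff)
  also have "\<dots> = 2 * aggregate \<mu> $ c $ u" using sumS eta_sum_UNIV[OF u]
    by (simp add: sum.distrib sum_distrib_left[symmetric])
  also have "\<dots> \<le> 2 * m_max" using x0 by simp
  finally show "norm1 (fast_dev \<mu> c u) \<le> 2 * m_max" .
qed

lemma norm_dev_le_sum_fast_dev: assumes mu: "\<mu> \<in> X"
  shows "norm (\<mu> - Bsk (aggregate \<mu>)) \<le> (\<Sum>c\<in>UNIV. \<Sum>u\<in>Pset c. norm1 (fast_dev \<mu> c u))"
proof -
  have comp: "\<bar>(\<mu> - Bsk (aggregate \<mu>))$c$s$u\<bar> = (if u \<in> Pset c then \<bar>fast_dev \<mu> c u $ s\<bar> else 0)" for c s u
    using mu eta_eq_0 unfolding mem_X_iff by (auto simp: Bsk_nth fast_dev_def)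
  have "norm (\<mu> - Bsk (aggregate \<mu>)) \<le> (\<Sum>c\<in>UNIV. \<Sum>s\<in>UNIV. \<Sum>u\<in>UNIV. \<bar>(\<mu> - Bsk (aggregate \<mu>))$c$s$u\<bar>)" by (rule norm_le_sum_abs3)
  also have "\<dots> = (\<Sum>c\<in>UNIV. \<Sum>u\<in>UNIV. \<Sum>s\<in>UNIV. (if u \<in> Pset c then \<bar>fast_dev \<mu> c u $ s\<bar> else 0))"
    unfolding comp by (simp add: sum.swap[of _ "UNIV::'s set"])
  also have "\<dots> = (\<Sum>c\<in>UNIV. \<Sum>u\<in>UNIV. (if u \<in> Pset c then norm1 (fast_dev \<mu> c u) else 0))"
    by (intro sum.cong refl) (simp add: norm1_def)
  also have "\<dots> = (\<Sum>c\<in>UNIV. \<Sum>u\<in>Pset c. norm1 (fast_dev \<mu> c u))"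
    by (rule sum.cong[OF refl]) (simp add: sum.If_cases Int_def)
  finally show ?thesis .
qed

lemma bounded_linear_fast_dev: "bounded_linear (\<lambda>\<mu>. fast_dev \<mu> c u)"
proof -
  have "linear (\<lambda>\<mu>. fast_dev \<mu> c u)"
    by (rule linearI) (auto simp: fast_dev_def aggregate_def vec_eq_iff algebra_simps sum.distrib sum_distrib_left)
  then show ?thesis using linear_conv_bounded_linear by blast
qed

lemma fast_dev_has_vector_derivative:
  assumes sol: "solution \<epsilon> \<mu>" and u: "u \<in> Pset c" and \<tau>: "\<tau> \<in> {0..t}"
  shows "((\<lambda>\<tau>. fast_dev (\<mu> \<tau>) c u) has_vector_derivative
           (kappa c / \<epsilon>) *\<^sub>R (mat_of (kernel_mat c u - 1) *v fast_dev (\<mu> \<tau>) c u) + dev_forcing (\<mu> \<tau>) c u)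
         (at \<tau> within {0..t})"
proof -
  have "((\<lambda>\<tau>. fast_dev (\<mu> \<tau>) c u) has_vector_derivative fast_dev (Ef \<epsilon> (\<mu> \<tau>)) c u) (at \<tau> within {0..})"
    using bounded_linear.has_vector_derivative[OF bounded_linear_fast_dev solution_deriv[OF sol]] \<tau> by auto
  then have "((\<lambda>\<tau>. fast_dev (\<mu> \<tau>) c u) has_vector_derivative fast_dev (Ef \<epsilon> (\<mu> \<tau>)) c u) (at \<tau> within {0..t})"
    by (rule has_vector_derivative_within_subset) auto
  then show ?thesis using fast_dev_Efield[OF solution_in_X[OF sol] u, of \<tau> \<epsilon>] \<tau> by auto
qed

text \<open>The relaxation rate \<open>\<kappa>^c/\<epsilon>\<close> beats the \<open>O(1)\<close> forcing: the deviation is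
  \<open>O(exp (-\<gamma> t/\<epsilon>) + \<epsilon>)\<close>, and \<open>exp (-y) \<le> 1/y\<close> turns the first term into \<open>O(\<epsilon>/t)\<close>.\<close>

lemma fast_dev_bound: assumes u: "u \<in> Pset c"
  shows "\<exists>K1 K2. 0 \<le> K1 \<and> 0 \<le> K2 \<and> (\<forall>\<epsilon> \<mu> t. 0 < \<epsilon> \<longrightarrow> solution \<epsilon> \<mu> \<longrightarrow> 0 < t \<longrightarrow>
      norm1 (fast_dev (\<mu> t) c u) \<le> \<epsilon> * (K1 / t + K2))"
proof -
  interpret accessible_chain "kernel_mat c u" by (rule accessible_chain_kernel_mat[OF u])
  obtain C \<gamma> where C: "1 \<le> C" and \<gamma>: "0 < \<gamma>" and contr: "\<And>s v. 0 \<le> s \<Longrightarrow> vec_sum v = 0 \<Longrightarrow>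
      norm1 (mat_of (transition s) *v v) \<le> C * exp (- \<gamma> * s) * norm1 v"
    using transition_contracts by blast
  obtain RV where RV: "0 \<le> RV" "\<forall>\<mu>\<in>X. \<forall>c s u. u \<in> Pset c \<longrightarrow> \<bar>state_rev \<mu> c s u\<bar> \<le> RV"
    using state_rev_bounded by blast
  define W where "W = 2 * real CARD('s) * RV"
  have W: "0 \<le> W" unfolding W_def using RV by simp
  have "norm1 (fast_dev (\<mu> t) c u) \<le> \<epsilon> * ((2 * C * m_max / \<gamma>) / t + C * W / \<gamma>)"
    if \<epsilon>: "0 < \<epsilon>" and sol: "solution \<epsilon> \<mu>" and t: "0 < t" for \<epsilon> \<mu> t
  proof -
    define k where "k = kappa c / \<epsilon>"
    have k: "0 < k" "1 / k \<le> \<epsilon>" unfolding k_def using \<epsilon> kappa_ge[of c] by (auto simp: field_simps)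
    have forcing: "\<forall>\<tau>\<in>{0..t}. vec_sum (dev_forcing (\<mu> \<tau>) c u) = 0 \<and> norm1 (dev_forcing (\<mu> \<tau>) c u) \<le> W"
    proof
      fix \<tau> assume "\<tau> \<in> {0..t}"
      then have "\<mu> \<tau> \<in> X" using solution_in_X[OF sol] by auto
      then show "vec_sum (dev_forcing (\<mu> \<tau>) c u) = 0 \<and> norm1 (dev_forcing (\<mu> \<tau>) c u) \<le> W"
        using dev_forcing_bounds[of "\<mu> \<tau>" u c RV] RV(2) u unfolding W_def by auto
    qed
    have dev0: "vec_sum (fast_dev (\<mu> 0) c u) = 0" "norm1 (fast_dev (\<mu> 0) c u) \<le> 2 * m_max"
      using fast_dev_bounds[OF solution_in_X[OF sol] u] by auto
    have "norm1 (fast_dev (\<mu> t) c u) \<le> C * exp (- \<gamma> * (k * t)) * norm1 (fast_dev (\<mu> 0) c u) + C * W / (\<gamma> * k)"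
      by (rule variation_of_constants_norm1[OF contr _ \<gamma> k(1)])
         (use C t forcing dev0 fast_dev_has_vector_derivative[OF sol u] in \<open>auto simp: k_def\<close>)
    also have "\<dots> \<le> C * (1 / (\<gamma> * k * t)) * (2 * m_max) + C * W / (\<gamma> * k)"
    proof -
      have "exp (- \<gamma> * (k * t)) \<le> 1 / (\<gamma> * k * t)"
        using exp_neg_le_inverse[of "\<gamma> * k * t"] \<gamma> k t by (simp add: mult.assoc)
      then show ?thesis using C dev0 \<gamma> k t norm1_nonneg[of "fast_dev (\<mu> 0) c u"]
        by (intro add_mono mult_mono) auto
    qed
    also have "\<dots> = (1 / k) * ((2 * C * m_max / \<gamma>) / t + C * W / \<gamma>)"
      using \<gamma> k t by (simp add: field_simps)
    also have "\<dots> \<le> \<epsilon> * ((2 * C * m_max / \<gamma>) / t + C * W / \<gamma>)"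
      using k C \<gamma> t W m_max_pos by (intro mult_right_mono) auto
    finally show ?thesis .
  qed
  moreover have "0 \<le> 2 * C * m_max / \<gamma>" "0 \<le> C * W / \<gamma>" using C \<gamma> m_max_pos W by auto
  ultimately show ?thesis by blast
qed

lemma fast_error_bound: "\<exists>K1 K2. 0 \<le> K1 \<and> 0 \<le> K2 \<and> (\<forall>\<epsilon> \<mu> t. 0 < \<epsilon> \<longrightarrow> solution \<epsilon> \<mu> \<longrightarrow> 0 < t \<longrightarrow>
      norm (\<mu> t - Bsk (aggregate (\<mu> t))) \<le> \<epsilon> * (K1 / t + K2))"
proof -
  have "\<forall>c u. \<exists>K1 K2. u \<in> Pset c \<longrightarrow> 0 \<le> K1 \<and> 0 \<le> K2 \<and> (\<forall>\<epsilon> \<mu> t. 0 < \<epsilon> \<longrightarrow> solution \<epsilon> \<mu> \<longrightarrow> 0 < t \<longrightarrow>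
      norm1 (fast_dev (\<mu> t) c u) \<le> \<epsilon> * (K1 / t + K2))"
    using fast_dev_bound by blast
  then obtain k1 k2 where kk: "\<And>c u. u \<in> Pset c \<Longrightarrow> 0 \<le> k1 c u \<and> 0 \<le> k2 c u \<and> (\<forall>\<epsilon> \<mu> t. 0 < \<epsilon> \<longrightarrow> solution \<epsilon> \<mu> \<longrightarrow> 0 < t \<longrightarrow>
      norm1 (fast_dev (\<mu> t) c u) \<le> \<epsilon> * (k1 c u / t + k2 c u))"
    by metis
  define K1 where "K1 = (\<Sum>c\<in>UNIV. \<Sum>u\<in>Pset c. k1 c u)"
  define K2 where "K2 = (\<Sum>c\<in>UNIV. \<Sum>u\<in>Pset c. k2 c u)"
  have "norm (\<mu> t - Bsk (aggregate (\<mu> t))) \<le> \<epsilon> * (K1 / t + K2)"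
    if "0 < \<epsilon>" "solution \<epsilon> \<mu>" "0 < t" for \<epsilon> \<mu> t
  proof -
    have "norm (\<mu> t - Bsk (aggregate (\<mu> t))) \<le> (\<Sum>c\<in>UNIV. \<Sum>u\<in>Pset c. norm1 (fast_dev (\<mu> t) c u))"
      using norm_dev_le_sum_fast_dev solution_in_X that by simp
    also have "\<dots> \<le> (\<Sum>c\<in>UNIV. \<Sum>u\<in>Pset c. \<epsilon> * (k1 c u / t + k2 c u))"
      using kk that by (intro sum_mono) auto
    also have "\<dots> = \<epsilon> * (K1 / t + K2)"
      unfolding K1_def K2_def by (simp add: sum_distrib_left sum_divide_distrib sum.distrib algebra_simps)
    finally show ?thesis .
  qed
  moreover have "0 \<le> K1" "0 \<le> K2" unfolding K1_def K2_def using kk by (auto intro!: sum_nonneg)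
  ultimately show ?thesis by blast
qed

end
section \<open>Lyapunov stability under fast perturbations\<close>

locale lyapunov_model = population_model Sset Pset Act phi pol m kappa F rho
  for Sset :: "'c::finite \<Rightarrow> 's::finite set"
    and Pset :: "'c \<Rightarrow> 'u::finite set"
    and Act :: "'c \<Rightarrow> 's \<Rightarrow> 'a set"
    and phi pol m kappa F rho +
  fixes MF :: "(real^'u^'c) set"
    and Dbar :: "(real^'u^'c) set"
    and V :: "real^'u^'c \<Rightarrow> real"
    and V' :: "real^'u^'c \<Rightarrow> real^'u^'c"
  assumes MF_ne: "MF \<noteq> {}"
    and MF_closed: "closed MF"
    and MF_sub: "MF \<subseteq> Dx Pset m"
    and Dbar_sub: "Dbar \<subseteq> Dx Pset m"
    and Dbar_nbhd: "\<exists>W. open W \<and> MF \<subseteq> W \<and> W \<inter> Dx Pset m \<subseteq> Dbar"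
    and V_deriv: "\<And>x. x \<in> Dbar \<Longrightarrow> (V has_derivative (\<lambda>h. V' x \<bullet> h)) (at x within Dbar)"
    and V'_cont: "continuous_on Dbar V'"
    and V'_bdd: "bounded (V' ` Dbar)"
    and V_nonneg: "\<And>x. x \<in> Dbar \<Longrightarrow> V x \<ge> 0"
    and V_pos: "\<And>x. x \<in> Dbar - MF \<Longrightarrow> V x > 0"
    and V_zero: "\<And>x. x \<in> MF \<Longrightarrow> V x = 0"
    and V_dec: "\<And>x. x \<in> Dbar - MF \<Longrightarrow> V' x \<bullet> gred Pset rho (\<lambda>x. F (BSK Sset Pset (eta Sset Act phi pol) x)) x < 0"
begin

abbreviation "g \<equiv> gred Pset rho FF"
abbreviation "M \<equiv> Bsk ` MF"
abbreviation "fast_error \<mu> t \<equiv> norm (\<mu> t - Bsk (aggregate (\<mu> t)))"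

lemma compact_MF: "compact MF"
  using compact_subset_D[OF MF_closed MF_sub] .

lemma compact_D_infdist: assumes "closed I" shows "compact {z\<in>D. infdist z MF \<in> I}"
proof -
  have "{z\<in>D. infdist z MF \<in> I} = D \<inter> (\<lambda>z. infdist z MF) -` I" by auto
  moreover have "closed (D \<inter> (\<lambda>z. infdist z MF) -` I)"
    by (intro closed_Int closed_D continuous_closed_vimage assms continuous_infdist continuous_ident)
  ultimately show ?thesis by (intro compact_subset_D) auto
qed

lemma V_continuous_on: "continuous_on Dbar V"
  unfolding continuous_on_eq_continuous_within
  using V_deriv has_derivative_continuous by blast

lemma g_lipschitz: "\<exists>L. L-lipschitz_on D g"
proof -
  obtain Fb where Fb: "0 \<le> Fb" "\<forall>\<mu>\<in>X. norm (F \<mu>) \<le> Fb" using F_bounded by blast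
  obtain LF where LF: "0 \<le> LF" "\<forall>\<mu>\<in>X. \<forall>\<nu>\<in>X. norm (F \<mu> - F \<nu>) \<le> LF * norm (\<mu> - \<nu>)" using F_lipschitz by blast
  obtain LH where LH: "0 \<le> LH" "\<forall>x\<in>D. \<forall>z\<in>D. \<forall>p q. norm p \<le> Fb \<longrightarrow> norm q \<le> Fb \<longrightarrow>
      norm (rev_field p x - rev_field q z) \<le> LH * (norm (p - q) + norm (x - z))"
    using rev_field_lipschitz[OF Fb(1)] by blast
  obtain CB where CB: "CB > 0" "\<forall>x z. norm (Bsk x - Bsk z) \<le> CB * norm (x - z)"
    using lipschitz_bound_bounded_linear[OF bounded_linear_Bsk] by blast
  have "norm (g x - g z) \<le> (LH * (LF * CB + 1)) * norm (x - z)" if x: "x \<in> D" and z: "z \<in> D" for x z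
  proof -
    have FF: "norm (FF x - FF z) \<le> LF * (CB * norm (x - z))"
      using LF Bsk_in_X x z CB(2)[rule_format, of x z] by (meson mult_left_mono order_trans)
    have "norm (g x - g z) \<le> LH * (norm (FF x - FF z) + norm (x - z))"
      unfolding gred_eq_rev_field using LH(2) x z Fb Bsk_in_X by blast
    also have "\<dots> \<le> LH * (LF * (CB * norm (x - z)) + norm (x - z))"
      using FF LH(1) by (intro mult_left_mono add_mono) auto
    also have "\<dots> = (LH * (LF * CB + 1)) * norm (x - z)" by (simp add: algebra_simps)
    finally show ?thesis .
  qed
  then show ?thesis using LH LF CB by (intro exI[of _ "LH * (LF * CB + 1)"] lipschitz_onI) (auto simp: dist_norm)
qed

lemma V'_g_continuous_on: "continuous_on Dbar (\<lambda>z. V' z \<bullet> g z)"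
proof -
  obtain L where "L-lipschitz_on D g" using g_lipschitz by blast
  then have "continuous_on Dbar g" using Dbar_sub by (meson continuous_on_subset lipschitz_on_continuous_on)
  then show ?thesis using V'_cont by (intro continuous_on_inner)
qed

lemma V_pos_bound: assumes "compact K" "K \<subseteq> Dbar" "K \<inter> MF = {}" shows "\<exists>v>0. \<forall>z\<in>K. v \<le> V z"
proof (cases "K = {}")
  case False
  obtain z0 where z0: "z0 \<in> K" "\<forall>z\<in>K. V z0 \<le> V z"
    using continuous_attains_inf[OF assms(1) False continuous_on_subset[OF V_continuous_on assms(2)]] by blast
  then show ?thesis using V_pos[of z0] assms(2,3) by blast
qed (intro exI[of _ 1], auto)

lemma V'_g_neg_bound: assumes "compact K" "K \<subseteq> Dbar" "K \<inter> MF = {}" shows "\<exists>\<kappa>>0. \<forall>z\<in>K. V' z \<bullet> g z \<le> - \<kappa>"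
proof (cases "K = {}")
  case False
  obtain z0 where z0: "z0 \<in> K" "\<forall>z\<in>K. V' z \<bullet> g z \<le> V' z0 \<bullet> g z0"
    using continuous_attains_sup[OF assms(1) False continuous_on_subset[OF V'_g_continuous_on assms(2)]] by blast
  have "V' z0 \<bullet> g z0 < 0" using V_dec z0(1) assms(2,3) by blast
  then show ?thesis using z0 by (intro exI[of _ "- (V' z0 \<bullet> g z0)"]) auto
qed (intro exI[of _ 1], auto)

lemma Dbar_contains_neighbourhood: "\<exists>r>0. \<forall>z\<in>D. infdist z MF \<le> r \<longrightarrow> z \<in> Dbar"
proof -
  obtain W where W: "open W" "MF \<subseteq> W" "W \<inter> D \<subseteq> Dbar" using Dbar_nbhd by blast
  show ?thesis
  proof (cases "- W = {}")
    case True
    then show ?thesis using W by (intro exI[of _ 1]) auto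
  next
    case False
    obtain a b where ab: "a \<in> MF" "b \<in> - W" "dist a b = setdist MF (- W)"
      using setdist_compact_closed[OF compact_MF _ MF_ne False] W(1) by blast
    have sd: "0 < setdist MF (- W)" using ab W(2) by (metis ComplD dist_pos_lt subsetD)
    have "z \<in> W" if z: "infdist z MF \<le> setdist MF (- W) / 2" for z
    proof (rule ccontr)
      assume "z \<notin> W"
      obtain z0 where z0: "z0 \<in> MF" "infdist z MF = dist z z0"
        using infdist_attains_inf[OF MF_closed MF_ne] by blast
      have "setdist MF (- W) \<le> dist z0 z" using \<open>z \<notin> W\<close> z0 by (intro setdist_le_dist) auto
      then show False using z z0(2) sd by (simp add: dist_commute)
    qed
    then show ?thesis using sd W(3) by (intro exI[of _ "setdist MF (- W) / 2"]) auto
  qed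
qed

lemma V_small_near_MF:
  assumes r: "0 < r" "\<forall>z\<in>D. infdist z MF \<le> r \<longrightarrow> z \<in> Dbar" and e: "0 < e"
  shows "\<exists>\<rho>>0. \<rho> \<le> r \<and> (\<forall>z\<in>D. infdist z MF \<le> \<rho> \<longrightarrow> V z < e)"
proof -
  define K where "K = {z\<in>D. infdist z MF \<in> {..r}}"
  have K: "compact K" "K \<subseteq> Dbar" using compact_D_infdist[of "{..r}"] r unfolding K_def by auto
  then have "uniformly_continuous_on K V"
    by (intro compact_uniformly_continuous continuous_on_subset[OF V_continuous_on])
  then obtain d where d: "d > 0" "\<forall>x\<in>K. \<forall>x'\<in>K. dist x' x < d \<longrightarrow> dist (V x') (V x) < e"
    unfolding uniformly_continuous_on_def using e by blast
  have "V z < e" if z: "z \<in> D" "infdist z MF \<le> min r (d/2)" for z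
  proof -
    obtain z0 where z0: "z0 \<in> MF" "infdist z MF = dist z z0" using infdist_attains_inf[OF MF_closed MF_ne] by blast
    have "z \<in> K" "z0 \<in> K" "dist z z0 < d" using z z0 MF_sub r d unfolding K_def by auto
    then have "dist (V z) (V z0) < e" using d by blast
    then show ?thesis using V_zero[OF z0(1)] by (simp add: dist_real_def)
  qed
  then show ?thesis using r d by (intro exI[of _ "min r (d/2)"]) auto
qed

lemma infdist_aggregate_le: "\<exists>CA>0. \<forall>\<mu>. infdist (aggregate \<mu>) MF \<le> CA * infdist \<mu> M"
proof -
  obtain CA where CA: "CA > 0" "\<forall>x z. norm (aggregate x - aggregate z) \<le> CA * norm (x - z)"
    using lipschitz_bound_bounded_linear[OF bounded_linear_aggregate] by blast
  have "closed M"
    using compact_MF by (intro compact_imp_closed compact_continuous_image linear_continuous_on bounded_linear_Bsk)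
  have "infdist (aggregate \<mu>) MF \<le> CA * infdist \<mu> M" for \<mu>
  proof -
    obtain z where z: "z \<in> MF" "infdist \<mu> M = dist \<mu> (Bsk z)"
      using infdist_attains_inf[OF \<open>closed M\<close>] MF_ne by blast
    have "infdist (aggregate \<mu>) MF \<le> dist (aggregate \<mu>) z" by (rule infdist_le[OF z(1)])
    also have "\<dots> = norm (aggregate \<mu> - aggregate (Bsk z))" using aggregate_Bsk z(1) MF_sub by (auto simp: dist_norm)
    also have "\<dots> \<le> CA * norm (\<mu> - Bsk z)" using CA by blast
    finally show ?thesis using z by (simp add: dist_norm)
  qed
  then show ?thesis using CA by blast
qed

lemma infdist_M_le: "\<exists>CB>0. \<forall>\<mu> x. infdist \<mu> M \<le> norm (\<mu> - Bsk x) + CB * infdist x MF"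
proof -
  obtain CB where CB: "CB > 0" "\<forall>x z. norm (Bsk x - Bsk z) \<le> CB * norm (x - z)"
    using lipschitz_bound_bounded_linear[OF bounded_linear_Bsk] by blast
  have "infdist \<mu> M \<le> norm (\<mu> - Bsk x) + CB * infdist x MF" for \<mu> x
  proof -
    obtain z where z: "z \<in> MF" "infdist x MF = dist x z" using infdist_attains_inf[OF MF_closed MF_ne] by blast
    have "infdist \<mu> M \<le> dist \<mu> (Bsk z)" using z by (intro infdist_le) auto
    also have "\<dots> \<le> norm (\<mu> - Bsk x) + norm (Bsk x - Bsk z)"
      unfolding dist_norm using norm_triangle_ineq[of "\<mu> - Bsk x" "Bsk x - Bsk z"] by simp
    also have "\<dots> \<le> norm (\<mu> - Bsk x) + CB * infdist x MF" using CB z by (simp add: dist_norm)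
    finally show ?thesis .
  qed
  then show ?thesis using CB by blast
qed

lemma aggregate_speed_bounded: "\<exists>G. 0 \<le> G \<and> (\<forall>\<mu>\<in>X. norm (rev_field (F \<mu>) (aggregate \<mu>)) \<le> G)"
proof -
  obtain Fb where Fb: "0 \<le> Fb" "\<forall>\<mu>\<in>X. norm (F \<mu>) \<le> Fb" using F_bounded by blast
  obtain DB where DB: "0 \<le> DB" "\<forall>x\<in>D. norm x \<le> DB" using D_norm_bound by blast
  obtain LH where LH: "0 \<le> LH" "\<forall>x\<in>D. \<forall>z\<in>D. \<forall>p q. norm p \<le> Fb \<longrightarrow> norm q \<le> Fb \<longrightarrow>
      norm (rev_field p x - rev_field q z) \<le> LH * (norm (p - q) + norm (x - z))"
    using rev_field_lipschitz[OF Fb(1)] by blast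
  obtain x0 where x0: "x0 \<in> D" using MF_ne MF_sub by blast
  have "norm (rev_field (F \<mu>) (aggregate \<mu>)) \<le> LH * (Fb + 2 * DB) + norm (rev_field 0 x0)" if mu: "\<mu> \<in> X" for \<mu>
  proof -
    have x: "aggregate \<mu> \<in> D" by (rule aggregate_in_D[OF mu])
    have "norm (aggregate \<mu>) \<le> DB" "norm x0 \<le> DB" using DB(2) x x0 by auto
    then have "norm (F \<mu> - 0) + norm (aggregate \<mu> - x0) \<le> Fb + 2 * DB"
      using norm_triangle_ineq4[of "aggregate \<mu>" x0] Fb mu by auto
    moreover have "norm (rev_field (F \<mu>) (aggregate \<mu>) - rev_field 0 x0)
        \<le> LH * (norm (F \<mu> - 0) + norm (aggregate \<mu> - x0))"
      using LH(2)[rule_format, OF x x0, of "F \<mu>" 0] Fb mu by simp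
    ultimately have "norm (rev_field (F \<mu>) (aggregate \<mu>) - rev_field 0 x0) \<le> LH * (Fb + 2 * DB)"
      using LH(1) by (meson mult_left_mono order_trans)
    then show ?thesis using norm_triangle_ineq2[of "rev_field (F \<mu>) (aggregate \<mu>)" "rev_field 0 x0"] by linarith
  qed
  then show ?thesis using LH Fb DB by (intro exI[of _ "LH * (Fb + 2 * DB) + norm (rev_field 0 x0)"]) auto
qed

lemma aggregate_continuous_on: "solution \<epsilon> \<mu> \<Longrightarrow> continuous_on {0..} (\<lambda>t. aggregate (\<mu> t))"
  unfolding continuous_on_eq_continuous_within
  using aggregate_solution_deriv has_vector_derivative_continuous by fastforce

lemma aggregate_dist_le:
  assumes sol: "solution \<epsilon> \<mu>" and G: "\<forall>\<mu>\<in>X. norm (rev_field (F \<mu>) (aggregate \<mu>)) \<le> G"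
    and st: "0 \<le> s" "s \<le> t"
  shows "dist (aggregate (\<mu> t)) (aggregate (\<mu> s)) \<le> G * (t - s)"
proof -
  have "norm (aggregate (\<mu> t) - aggregate (\<mu> s)) \<le> G * norm (t - s)"
  proof (rule differentiable_bound[of "{s..t}" "\<lambda>t. aggregate (\<mu> t)" "\<lambda>\<tau> h. h *\<^sub>R rev_field (F (\<mu> \<tau>)) (aggregate (\<mu> \<tau>))"])
    fix \<tau> assume \<tau>: "\<tau> \<in> {s..t}"
    have "((\<lambda>t. aggregate (\<mu> t)) has_vector_derivative rev_field (F (\<mu> \<tau>)) (aggregate (\<mu> \<tau>))) (at \<tau> within {s..t})"
      by (rule has_vector_derivative_within_subset[OF aggregate_solution_deriv[OF sol]]) (use \<tau> st in auto)
    then show "((\<lambda>t. aggregate (\<mu> t)) has_derivative (\<lambda>h. h *\<^sub>R rev_field (F (\<mu> \<tau>)) (aggregate (\<mu> \<tau>)))) (at \<tau> within {s..t})"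
      by (simp add: has_vector_derivative_def)
    have "norm (rev_field (F (\<mu> \<tau>)) (aggregate (\<mu> \<tau>))) \<le> G" using G solution_in_X[OF sol] \<tau> st by auto
    then show "onorm (\<lambda>h. h *\<^sub>R rev_field (F (\<mu> \<tau>)) (aggregate (\<mu> \<tau>))) \<le> G"
      by (simp add: onorm_scaleR_left onorm_id)
  qed (use st in auto)
  then show ?thesis using st by (simp add: dist_norm)
qed

lemma V_aggregate_has_derivative:
  assumes sol: "solution \<epsilon> \<mu>" and a: "0 \<le> a"
    and Dbar: "\<forall>t\<in>{a..b}. aggregate (\<mu> t) \<in> Dbar" and t: "t \<in> {a..b}"
  shows "((\<lambda>t. V (aggregate (\<mu> t))) has_real_derivative
           V' (aggregate (\<mu> t)) \<bullet> rev_field (F (\<mu> t)) (aggregate (\<mu> t))) (at t within {a..b})"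
proof -
  have "((\<lambda>t. aggregate (\<mu> t)) has_vector_derivative rev_field (F (\<mu> t)) (aggregate (\<mu> t))) (at t within {a..b})"
    by (rule has_vector_derivative_within_subset[OF aggregate_solution_deriv[OF sol]]) (use t a in auto)
  then have "((\<lambda>t. aggregate (\<mu> t)) has_derivative (\<lambda>h. h *\<^sub>R rev_field (F (\<mu> t)) (aggregate (\<mu> t)))) (at t within {a..b})"
    by (simp add: has_vector_derivative_def)
  moreover have "(\<lambda>t. aggregate (\<mu> t)) ` {a..b} \<subseteq> Dbar" using Dbar by auto
  ultimately have "((\<lambda>t. V (aggregate (\<mu> t))) has_derivative
      (\<lambda>h. V' (aggregate (\<mu> t)) \<bullet> (h *\<^sub>R rev_field (F (\<mu> t)) (aggregate (\<mu> t))))) (at t within {a..b})"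
    using has_derivative_in_compose2[OF V_deriv _ t] by blast
  then show ?thesis
    unfolding has_field_derivative_def by (rule has_derivative_eq_rhs) (auto simp: fun_eq_iff)
qed

text \<open>Along (E) the derivative of \<open>V\<close> at the aggregate differs from its derivative along (R) only
  through the payoff, \<open>F \<mu>\<close> versus \<open>F (B_{S\<rightarrow>K} x)\<close>, hence by \<open>O(|\<mu> - B_{S\<rightarrow>K} x|)\<close>.\<close>

lemma V'_rev_field_le: "\<exists>K. 0 \<le> K \<and> (\<forall>\<mu>\<in>X. aggregate \<mu> \<in> Dbar \<longrightarrow>
   V' (aggregate \<mu>) \<bullet> rev_field (F \<mu>) (aggregate \<mu>) \<le> V' (aggregate \<mu>) \<bullet> g (aggregate \<mu>) + K * norm (\<mu> - Bsk (aggregate \<mu>)))"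
proof -
  obtain Fb where Fb: "0 \<le> Fb" "\<forall>\<mu>\<in>X. norm (F \<mu>) \<le> Fb" using F_bounded by blast
  obtain LF where LF: "0 \<le> LF" "\<forall>\<mu>\<in>X. \<forall>\<nu>\<in>X. norm (F \<mu> - F \<nu>) \<le> LF * norm (\<mu> - \<nu>)" using F_lipschitz by blast
  obtain LH where LH: "0 \<le> LH" "\<forall>x\<in>D. \<forall>z\<in>D. \<forall>p q. norm p \<le> Fb \<longrightarrow> norm q \<le> Fb \<longrightarrow>
      norm (rev_field p x - rev_field q z) \<le> LH * (norm (p - q) + norm (x - z))"
    using rev_field_lipschitz[OF Fb(1)] by blast
  obtain Vb where Vb: "0 \<le> Vb" "\<forall>z\<in>Dbar. norm (V' z) \<le> Vb"
    using V'_bdd unfolding bounded_iff by (meson norm_ge_zero order_trans imageI)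
  have "V' x \<bullet> rev_field (F \<mu>) x \<le> V' x \<bullet> g x + (Vb * LH * LF) * norm (\<mu> - Bsk x)"
    if mu: "\<mu> \<in> X" and x_def: "x = aggregate \<mu>" and Dbar: "x \<in> Dbar" for \<mu> x
  proof -
    have x: "x \<in> D" "Bsk x \<in> X" using aggregate_in_D[OF mu] Bsk_in_X x_def by auto
    have "V' x \<bullet> rev_field (F \<mu>) x - V' x \<bullet> g x \<le> norm (V' x) * norm (rev_field (F \<mu>) x - rev_field (F (Bsk x)) x)"
      unfolding gred_eq_rev_field inner_diff_right[symmetric] by (rule norm_cauchy_schwarz)
    also have "\<dots> \<le> Vb * (LH * (norm (F \<mu> - F (Bsk x)) + norm (x - x)))"
    proof (rule mult_mono)
      show "norm (rev_field (F \<mu>) x - rev_field (F (Bsk x)) x) \<le> LH * (norm (F \<mu> - F (Bsk x)) + norm (x - x))"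
        using LH(2) x Fb mu by blast
    qed (use Vb Dbar in auto)
    also have "\<dots> \<le> Vb * (LH * (LF * norm (\<mu> - Bsk x)))"
      using LF mu x Vb LH by (intro mult_left_mono) auto
    finally show ?thesis by (simp add: algebra_simps)
  qed
  then show ?thesis using Vb LH LF by (intro exI[of _ "Vb * LH * LF"]) auto
qed

lemma V_decrease_rate:
  assumes "compact K" "K \<subseteq> Dbar" "K \<inter> MF = {}"
  shows "\<exists>\<kappa>>0. \<exists>\<eta>>0. \<forall>\<mu>\<in>X. aggregate \<mu> \<in> K \<longrightarrow> norm (\<mu> - Bsk (aggregate \<mu>)) \<le> \<eta> \<longrightarrow>
           V' (aggregate \<mu>) \<bullet> rev_field (F \<mu>) (aggregate \<mu>) \<le> - \<kappa>"
proof -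
  obtain \<kappa> where \<kappa>: "0 < \<kappa>" "\<forall>z\<in>K. V' z \<bullet> g z \<le> - \<kappa>" using V'_g_neg_bound[OF assms] by blast
  obtain L where L: "0 \<le> L" "\<forall>\<mu>\<in>X. aggregate \<mu> \<in> Dbar \<longrightarrow> V' (aggregate \<mu>) \<bullet> rev_field (F \<mu>) (aggregate \<mu>)
      \<le> V' (aggregate \<mu>) \<bullet> g (aggregate \<mu>) + L * norm (\<mu> - Bsk (aggregate \<mu>))"
    using V'_rev_field_le by blast
  have "V' (aggregate \<mu>) \<bullet> rev_field (F \<mu>) (aggregate \<mu>) \<le> - (\<kappa> / 2)"
    if \<mu>: "\<mu> \<in> X" "aggregate \<mu> \<in> K" and fast: "norm (\<mu> - Bsk (aggregate \<mu>)) \<le> \<kappa> / (2 * (L + 1))" for \<mu>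
  proof -
    have "L * norm (\<mu> - Bsk (aggregate \<mu>)) \<le> L * (\<kappa> / (2 * (L + 1)))" using fast L by (intro mult_left_mono) auto
    also have "\<dots> \<le> \<kappa> / 2" using L \<kappa> by (simp add: field_simps)
    finally have "L * norm (\<mu> - Bsk (aggregate \<mu>)) \<le> \<kappa> / 2" .
    moreover have "V' (aggregate \<mu>) \<bullet> rev_field (F \<mu>) (aggregate \<mu>)
        \<le> V' (aggregate \<mu>) \<bullet> g (aggregate \<mu>) + L * norm (\<mu> - Bsk (aggregate \<mu>))"
      using L(2) \<mu> assms(2) by blast
    moreover have "V' (aggregate \<mu>) \<bullet> g (aggregate \<mu>) \<le> - \<kappa>" using \<kappa>(2) \<mu>(2) by blast
    ultimately show ?thesis by linarith
  qed
  then show ?thesis using \<kappa> L by (intro exI[of _ "\<kappa> / 2"] conjI exI[of _ "\<kappa> / (2 * (L + 1))"]) auto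
qed

lemma fast_error_eventually_small:
  assumes \<eta>: "0 < \<eta>" and T0: "0 < T0"
  shows "\<exists>\<epsilon>s>0. \<forall>\<epsilon> \<mu> t. 0 < \<epsilon> \<longrightarrow> \<epsilon> < \<epsilon>s \<longrightarrow> solution \<epsilon> \<mu> \<longrightarrow> T0 \<le> t \<longrightarrow> fast_error \<mu> t \<le> \<eta>"
proof -
  obtain K1 K2 where K: "0 \<le> K1" "0 \<le> K2"
    "\<forall>\<epsilon> \<mu> t. 0 < \<epsilon> \<longrightarrow> solution \<epsilon> \<mu> \<longrightarrow> 0 < t \<longrightarrow> fast_error \<mu> t \<le> \<epsilon> * (K1 / t + K2)"
    using fast_error_bound by blast
  define \<epsilon>s where "\<epsilon>s = \<eta> / (K1 / T0 + K2 + 1)"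
  have pos: "0 < K1 / T0 + K2 + 1" using K T0 by (simp add: add_nonneg_pos)
  have "fast_error \<mu> t \<le> \<eta>" if \<epsilon>: "0 < \<epsilon>" "\<epsilon> < \<epsilon>s" and sol: "solution \<epsilon> \<mu>" and t: "T0 \<le> t" for \<epsilon> \<mu> t
  proof -
    have "K1 / t \<le> K1 / T0" using K T0 t by (intro divide_left_mono) auto
    then have "\<epsilon> * (K1 / t + K2) \<le> \<epsilon> * (K1 / T0 + K2 + 1)" using \<epsilon> by (intro mult_left_mono) auto
    moreover have "fast_error \<mu> t \<le> \<epsilon> * (K1 / t + K2)"
      using K(3) \<epsilon>(1) sol less_le_trans[OF T0 t] by blast
    ultimately have "fast_error \<mu> t \<le> \<epsilon> * (K1 / T0 + K2 + 1)" by linarith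
    also have "\<dots> \<le> \<epsilon>s * (K1 / T0 + K2 + 1)" using \<epsilon> pos by (intro mult_right_mono) auto
    also have "\<dots> = \<eta>" unfolding \<epsilon>s_def using pos by simp
    finally show ?thesis .
  qed
  moreover have "0 < \<epsilon>s" unfolding \<epsilon>s_def using \<eta> pos by simp
  ultimately show ?thesis by blast
qed

text \<open>Near the sphere \<open>infdist z M_F = r\<close> the function \<open>V\<close> exceeds some \<open>v\<close>, while it is below
  \<open>v/2\<close> near \<open>M_F\<close>; on the annulus in between \<open>V\<close> decreases at a definite rate along (R),
  which a small fast error cannot undo. So trajectories that start near \<open>M_F\<close> never reach the
  sphere.\<close>

lemma trapped_near_MF:
  assumes r: "0 < r" "\<forall>z\<in>D. infdist z MF \<le> r \<longrightarrow> z \<in> Dbar"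
  shows "\<exists>\<rho>>0. \<rho> < r \<and> (\<exists>\<eta>>0. \<forall>\<epsilon> \<mu> T0 t. solution \<epsilon> \<mu> \<longrightarrow> 0 \<le> T0 \<longrightarrow> (\<forall>s\<ge>T0. fast_error \<mu> s \<le> \<eta>) \<longrightarrow>
           infdist (aggregate (\<mu> T0)) MF \<le> \<rho> \<longrightarrow> T0 \<le> t \<longrightarrow> infdist (aggregate (\<mu> t)) MF < r)"
proof -
  define Sphere where "Sphere = {z\<in>D. infdist z MF \<in> {r}}"
  have "compact Sphere" "Sphere \<subseteq> Dbar" "Sphere \<inter> MF = {}"
    using compact_D_infdist[of "{r}"] r by (auto simp: Sphere_def infdist_zero)
  then obtain v where v: "0 < v" "\<forall>z\<in>Sphere. v \<le> V z" using V_pos_bound by blast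
  obtain \<rho>' where \<rho>': "0 < \<rho>'" "\<forall>z\<in>D. infdist z MF \<le> \<rho>' \<longrightarrow> V z < v / 2"
    using V_small_near_MF[OF r, of "v / 2"] v by auto
  define \<rho> where "\<rho> = min \<rho>' (r / 2)"
  have \<rho>: "0 < \<rho>" "\<rho> < r" "\<forall>z\<in>D. infdist z MF \<le> \<rho> \<longrightarrow> V z < v / 2" using \<rho>' r unfolding \<rho>_def by auto
  define Ann where "Ann = {z\<in>D. infdist z MF \<in> {\<rho>..r}}"
  have "compact Ann" "Ann \<subseteq> Dbar" "Ann \<inter> MF = {}"
    using compact_D_infdist[of "{\<rho>..r}"] r \<rho> by (auto simp: Ann_def infdist_zero)
  then obtain \<kappa> \<eta> where \<kappa>: "0 < \<kappa>" and \<eta>: "0 < \<eta>" and decrease: "\<forall>\<mu>\<in>X. aggregate \<mu> \<in> Ann \<longrightarrow>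
      norm (\<mu> - Bsk (aggregate \<mu>)) \<le> \<eta> \<longrightarrow> V' (aggregate \<mu>) \<bullet> rev_field (F \<mu>) (aggregate \<mu>) \<le> - \<kappa>"
    using V_decrease_rate by blast
  have "infdist (aggregate (\<mu> t)) MF < r"
    if sol: "solution \<epsilon> \<mu>" and T0: "0 \<le> T0" and fast: "\<forall>s\<ge>T0. fast_error \<mu> s \<le> \<eta>"
      and start: "infdist (aggregate (\<mu> T0)) MF \<le> \<rho>" and t: "T0 \<le> t" for \<epsilon> \<mu> T0 t
  proof -
    define x where "x s = aggregate (\<mu> s)" for s
    have xD: "x s \<in> D" if "0 \<le> s" for s
      using aggregate_in_D solution_in_X[OF sol that] unfolding x_def by blast
    have x_Dbar: "x s \<in> Dbar" if "T0 \<le> s" "infdist (x s) MF \<le> r" for s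
      using r(2) xD that T0 by auto
    have "infdist (x t) MF < r"
    proof (rule barrier_not_reached[where d="\<lambda>s. infdist (x s) MF" and f="\<lambda>s. V (x s)"
          and f'="\<lambda>s. V' (x s) \<bullet> rev_field (F (\<mu> s)) (x s)" and l="v / 2" and a=T0])
      show "continuous_on {T0..} (\<lambda>s. infdist (x s) MF)"
        unfolding x_def using T0
        by (intro continuous_on_infdist continuous_on_subset[OF aggregate_continuous_on[OF sol]]) auto
      show "infdist (x T0) MF < r" using start \<rho> unfolding x_def by simp
      show "((\<lambda>s. V (x s)) has_real_derivative V' (x s) \<bullet> rev_field (F (\<mu> s)) (x s)) (at s within {T0..b})"
        if "s \<in> {T0..b}" "\<forall>s\<in>{T0..b}. infdist (x s) MF \<le> r" for b s
        unfolding x_def by (rule V_aggregate_has_derivative[OF sol T0]) (use that x_Dbar x_def in auto)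
      show "V (x T0) \<le> v / 2" using \<rho>(3) xD[OF T0] start unfolding x_def by fastforce
      show "V' (x s) \<bullet> rev_field (F (\<mu> s)) (x s) \<le> 0"
        if s: "T0 \<le> s" "infdist (x s) MF \<le> r" "v / 2 < V (x s)" for s
      proof -
        have "0 \<le> s" using s T0 by simp
        then have "\<not> infdist (x s) MF \<le> \<rho>" using \<rho>(3) xD s(3) by force
        then have "x s \<in> Ann" using xD \<open>0 \<le> s\<close> s(2) unfolding Ann_def by auto
        moreover have "fast_error \<mu> s \<le> \<eta>" using fast s(1) by blast
        ultimately show ?thesis
          using decrease solution_in_X[OF sol \<open>0 \<le> s\<close>] \<kappa> unfolding x_def by (meson order_trans neg_le_0_iff_le less_imp_le)
      qed
      show "v / 2 < V (x s)" if "T0 \<le> s" "infdist (x s) MF = r" for s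
        using v xD[of s] that T0 unfolding Sphere_def by fastforce
    qed (rule t)
    then show ?thesis unfolding x_def .
  qed
  then show ?thesis using \<rho> \<eta> by blast
qed

text \<open>When \<open>V\<close> is a Lyapunov function on all of \<open>D_x\<close>, it decreases at a definite rate
  away from \<open>M_F\<close> and is bounded, so it cannot stay away for longer than a fixed time.\<close>

lemma reaches_near_MF:
  assumes Dbar: "Dbar = D" and \<rho>: "0 < \<rho>"
  shows "\<exists>\<eta>>0. \<exists>T>0. \<forall>\<epsilon> \<mu> T0. solution \<epsilon> \<mu> \<longrightarrow> 0 \<le> T0 \<longrightarrow> (\<forall>s\<ge>T0. fast_error \<mu> s \<le> \<eta>) \<longrightarrow>
           (\<exists>t\<in>{T0..T0 + T}. infdist (aggregate (\<mu> t)) MF < \<rho>)"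
proof -
  define Far where "Far = {z\<in>D. infdist z MF \<in> {\<rho>..}}"
  have "compact Far" "Far \<subseteq> Dbar" "Far \<inter> MF = {}"
    using compact_D_infdist[of "{\<rho>..}"] Dbar \<rho> by (auto simp: Far_def infdist_zero)
  then obtain \<kappa> \<eta> where \<kappa>: "0 < \<kappa>" and \<eta>: "0 < \<eta>" and decrease: "\<forall>\<mu>\<in>X. aggregate \<mu> \<in> Far \<longrightarrow>
      norm (\<mu> - Bsk (aggregate \<mu>)) \<le> \<eta> \<longrightarrow> V' (aggregate \<mu>) \<bullet> rev_field (F \<mu>) (aggregate \<mu>) \<le> - \<kappa>"
    using V_decrease_rate by blast
  have "bounded (V ` D)"
    using compact_D V_continuous_on Dbar by (intro compact_imp_bounded compact_continuous_image) auto
  then obtain b where "\<forall>z\<in>D. \<bar>V z\<bar> \<le> b" unfolding bounded_iff by auto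
  then have Vmax: "0 \<le> max 0 b" "\<forall>z\<in>D. V z \<le> max 0 b" by (auto dest: abs_le_D1)
  define T where "T = (max 0 b + 1) / \<kappa>"
  have T: "0 < T" "\<kappa> * T = max 0 b + 1" unfolding T_def using \<kappa> by auto
  have "\<exists>t\<in>{T0..T0 + T}. infdist (aggregate (\<mu> t)) MF < \<rho>"
    if sol: "solution \<epsilon> \<mu>" and T0: "0 \<le> T0" and fast: "\<forall>s\<ge>T0. fast_error \<mu> s \<le> \<eta>" for \<epsilon> \<mu> T0
  proof (rule ccontr)
    define x where "x s = aggregate (\<mu> s)" for s
    have xD: "x s \<in> D" if "0 \<le> s" for s
      using aggregate_in_D solution_in_X[OF sol that] unfolding x_def by blast
    assume "\<not> ?thesis"
    then have far: "x s \<in> Far" if "s \<in> {T0..T0 + T}" for s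
      using xD[of s] that T0 unfolding Far_def x_def by force
    have "V (x (T0 + T)) \<le> V (x T0) - \<kappa> * (T0 + T - T0)"
    proof (rule decrease_by_slope)
      show "T0 \<le> T0 + T" using T by simp
      show "((\<lambda>s. V (x s)) has_real_derivative V' (x s) \<bullet> rev_field (F (\<mu> s)) (x s)) (at s within {T0..T0 + T})"
        if "s \<in> {T0..T0 + T}" for s
        unfolding x_def by (rule V_aggregate_has_derivative[OF sol T0]) (use that xD Dbar T0 x_def in auto)
      show "V' (x s) \<bullet> rev_field (F (\<mu> s)) (x s) \<le> - \<kappa>" if s: "s \<in> {T0..T0 + T}" for s
      proof -
        have "0 \<le> s" "fast_error \<mu> s \<le> \<eta>" using fast s T0 by auto
        then show ?thesis using decrease solution_in_X[OF sol] far[OF s] unfolding x_def by blast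
      qed
    qed
    moreover have "\<kappa> * (T0 + T - T0) = max 0 b + 1" using T(2) by simp
    moreover have "V (x T0) \<le> max 0 b" using Vmax(2) xD[OF T0] by blast
    ultimately have "V (x (T0 + T)) < 0" by linarith
    then show False using V_nonneg xD[of "T0 + T"] T0 T Dbar by fastforce
  qed
  then show ?thesis using \<eta> T by blast
qed

lemma stable_near_M:
  "\<forall>B>0. \<exists>\<epsilon>s>0. \<exists>B0>0. \<exists>T>0. \<forall>\<epsilon>. 0 < \<epsilon> \<and> \<epsilon> < \<epsilon>s \<longrightarrow>
     (\<forall>\<mu>. solution \<epsilon> \<mu> \<longrightarrow> infdist (\<mu> 0) M \<le> B0 \<longrightarrow> (\<forall>t\<ge>T. infdist (\<mu> t) M \<le> B))"
proof (intro allI impI)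
  fix B :: real assume B: "0 < B"
  obtain r0 where r0: "0 < r0" "\<forall>z\<in>D. infdist z MF \<le> r0 \<longrightarrow> z \<in> Dbar"
    using Dbar_contains_neighbourhood by blast
  obtain CA where CA: "CA > 0" "\<forall>\<mu>. infdist (aggregate \<mu>) MF \<le> CA * infdist \<mu> M" using infdist_aggregate_le by blast
  obtain CB where CB: "CB > 0" "\<forall>\<mu> x. infdist \<mu> M \<le> norm (\<mu> - Bsk x) + CB * infdist x MF" using infdist_M_le by blast
  obtain G where G: "0 \<le> G" "\<forall>\<mu>\<in>X. norm (rev_field (F \<mu>) (aggregate \<mu>)) \<le> G" using aggregate_speed_bounded by blast
  define r where "r = min r0 (B / (2 * CB))"
  have "CB * r \<le> CB * (B / (2 * CB))" using CB unfolding r_def by (intro mult_left_mono) auto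
  then have r: "0 < r" "\<forall>z\<in>D. infdist z MF \<le> r \<longrightarrow> z \<in> Dbar" "CB * r \<le> B / 2"
    using r0 B CB unfolding r_def by auto
  obtain \<rho> \<eta>1 where \<rho>: "0 < \<rho>" and \<eta>1: "0 < \<eta>1" and trap: "\<forall>\<epsilon> \<mu> T0 t. solution \<epsilon> \<mu> \<longrightarrow> 0 \<le> T0 \<longrightarrow>
      (\<forall>s\<ge>T0. fast_error \<mu> s \<le> \<eta>1) \<longrightarrow> infdist (aggregate (\<mu> T0)) MF \<le> \<rho> \<longrightarrow> T0 \<le> t \<longrightarrow> infdist (aggregate (\<mu> t)) MF < r"
    using trapped_near_MF[OF r(1,2)] by blast
  define T0 where "T0 = \<rho> / (2 * (G + 1))"
  have T0: "0 < T0" "G * T0 \<le> \<rho> / 2" unfolding T0_def using \<rho> G by (auto simp: field_simps)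
  define B0 where "B0 = \<rho> / (2 * (CA + 1))"
  have B0: "0 < B0" "CA * B0 \<le> \<rho> / 2" unfolding B0_def using \<rho> CA by (auto simp: field_simps)
  obtain \<epsilon>s where \<epsilon>s: "0 < \<epsilon>s" "\<forall>\<epsilon> \<mu> t. 0 < \<epsilon> \<longrightarrow> \<epsilon> < \<epsilon>s \<longrightarrow> solution \<epsilon> \<mu> \<longrightarrow> T0 \<le> t \<longrightarrow> fast_error \<mu> t \<le> min (B / 2) \<eta>1"
    using fast_error_eventually_small[of "min (B / 2) \<eta>1" T0] B \<eta>1 T0 by auto
  have "infdist (\<mu> t) M \<le> B"
    if \<epsilon>: "0 < \<epsilon>" "\<epsilon> < \<epsilon>s" and sol: "solution \<epsilon> \<mu>" and init: "infdist (\<mu> 0) M \<le> B0" and t: "T0 \<le> t" for \<epsilon> \<mu> t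
  proof -
    have "infdist (aggregate (\<mu> 0)) MF \<le> \<rho> / 2"
      using CA(2)[rule_format, of "\<mu> 0"] mult_left_mono[OF init, of CA] CA(1) B0 by linarith
    moreover have "dist (aggregate (\<mu> T0)) (aggregate (\<mu> 0)) \<le> G * (T0 - 0)"
      using aggregate_dist_le[OF sol G(2), of 0 T0] T0 by simp
    ultimately have "infdist (aggregate (\<mu> T0)) MF \<le> \<rho>"
      using infdist_triangle[of "aggregate (\<mu> T0)" MF "aggregate (\<mu> 0)"] T0 by simp
    moreover have fast: "\<forall>s\<ge>T0. fast_error \<mu> s \<le> min (B / 2) \<eta>1" using \<epsilon>s(2) \<epsilon> sol by blast
    then have "\<forall>s\<ge>T0. fast_error \<mu> s \<le> \<eta>1" by auto
    ultimately have "infdist (aggregate (\<mu> t)) MF < r" using trap[rule_format, of \<epsilon> \<mu> T0 t] sol T0 t by simp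
    then have "CB * infdist (aggregate (\<mu> t)) MF \<le> B / 2" using CB(1) r(3) by (meson less_imp_le mult_left_mono order_trans)
    moreover have "fast_error \<mu> t \<le> B / 2" using fast t by auto
    ultimately show ?thesis using CB(2)[rule_format, of "\<mu> t" "aggregate (\<mu> t)"] by linarith
  qed
  then show "\<exists>\<epsilon>s>0. \<exists>B0>0. \<exists>T>0. \<forall>\<epsilon>. 0 < \<epsilon> \<and> \<epsilon> < \<epsilon>s \<longrightarrow>
     (\<forall>\<mu>. solution \<epsilon> \<mu> \<longrightarrow> infdist (\<mu> 0) M \<le> B0 \<longrightarrow> (\<forall>t\<ge>T. infdist (\<mu> t) M \<le> B))"
    using \<epsilon>s(1) B0(1) T0(1) by blast
qed

lemma attracted_near_M:
  assumes Dbar: "Dbar = D"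
  shows "\<forall>B>0. \<exists>\<epsilon>s>0. \<exists>T>0. \<forall>\<epsilon>. 0 < \<epsilon> \<and> \<epsilon> < \<epsilon>s \<longrightarrow> (\<forall>\<mu>. solution \<epsilon> \<mu> \<longrightarrow> (\<forall>t\<ge>T. infdist (\<mu> t) M \<le> B))"
proof (intro allI impI)
  fix B :: real assume B: "0 < B"
  obtain CB where CB: "CB > 0" "\<forall>\<mu> x. infdist \<mu> M \<le> norm (\<mu> - Bsk x) + CB * infdist x MF" using infdist_M_le by blast
  define r where "r = B / (2 * CB)"
  have r: "0 < r" "\<forall>z\<in>D. infdist z MF \<le> r \<longrightarrow> z \<in> Dbar" "CB * r \<le> B / 2"
    using B CB Dbar unfolding r_def by auto
  obtain \<rho> \<eta>1 where \<rho>: "0 < \<rho>" and \<eta>1: "0 < \<eta>1" and trap: "\<forall>\<epsilon> \<mu> T0 t. solution \<epsilon> \<mu> \<longrightarrow> 0 \<le> T0 \<longrightarrow>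
      (\<forall>s\<ge>T0. fast_error \<mu> s \<le> \<eta>1) \<longrightarrow> infdist (aggregate (\<mu> T0)) MF \<le> \<rho> \<longrightarrow> T0 \<le> t \<longrightarrow> infdist (aggregate (\<mu> t)) MF < r"
    using trapped_near_MF[OF r(1,2)] by blast
  obtain \<eta>2 T where \<eta>2: "0 < \<eta>2" and T: "0 < T" and reach: "\<forall>\<epsilon> \<mu> T0. solution \<epsilon> \<mu> \<longrightarrow> 0 \<le> T0 \<longrightarrow>
      (\<forall>s\<ge>T0. fast_error \<mu> s \<le> \<eta>2) \<longrightarrow> (\<exists>t\<in>{T0..T0 + T}. infdist (aggregate (\<mu> t)) MF < \<rho>)"
    using reaches_near_MF[OF Dbar \<rho>] by blast
  define \<eta> where "\<eta> = min (B / 2) (min \<eta>1 \<eta>2)"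
  obtain \<epsilon>s where \<epsilon>s: "0 < \<epsilon>s" "\<forall>\<epsilon> \<mu> t. 0 < \<epsilon> \<longrightarrow> \<epsilon> < \<epsilon>s \<longrightarrow> solution \<epsilon> \<mu> \<longrightarrow> 1 \<le> t \<longrightarrow> fast_error \<mu> t \<le> \<eta>"
    using fast_error_eventually_small[of \<eta> 1] B \<eta>1 \<eta>2 unfolding \<eta>_def by auto
  have "infdist (\<mu> t) M \<le> B"
    if \<epsilon>: "0 < \<epsilon>" "\<epsilon> < \<epsilon>s" and sol: "solution \<epsilon> \<mu>" and t: "1 + T \<le> t" for \<epsilon> \<mu> t
  proof -
    have fast: "\<forall>s\<ge>T0. fast_error \<mu> s \<le> \<eta>" if "1 \<le> T0" for T0 using \<epsilon>s(2) \<epsilon> sol that by auto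
    have "\<forall>s\<ge>1. fast_error \<mu> s \<le> \<eta>2" using fast[of 1] unfolding \<eta>_def by auto
    then obtain t' where t': "t' \<in> {1..1 + T}" "infdist (aggregate (\<mu> t')) MF < \<rho>"
      using reach[rule_format, of \<epsilon> \<mu> 1] sol by auto
    moreover have "\<forall>s\<ge>t'. fast_error \<mu> s \<le> \<eta>1" using fast[of t'] t' unfolding \<eta>_def by auto
    ultimately have "infdist (aggregate (\<mu> t)) MF < r" using trap[rule_format, of \<epsilon> \<mu> t' t] sol t by simp
    then have "CB * infdist (aggregate (\<mu> t)) MF \<le> B / 2" using CB(1) r(3) by (meson less_imp_le mult_left_mono order_trans)
    moreover have "fast_error \<mu> t \<le> B / 2" using fast[of 1] t T unfolding \<eta>_def by auto
    ultimately show ?thesis using CB(2)[rule_format, of "\<mu> t" "aggregate (\<mu> t)"] by linarith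
  qed
  then show "\<exists>\<epsilon>s>0. \<exists>T>0. \<forall>\<epsilon>. 0 < \<epsilon> \<and> \<epsilon> < \<epsilon>s \<longrightarrow> (\<forall>\<mu>. solution \<epsilon> \<mu> \<longrightarrow> (\<forall>t\<ge>T. infdist (\<mu> t) M \<le> B))"
    using \<epsilon>s(1) T by (intro exI[of _ \<epsilon>s] conjI exI[of _ "1 + T"]) auto
qed

end
theorem theorem4:
  fixes Sset :: "'c::finite \<Rightarrow> 's::finite set"
    and Pset :: "'c \<Rightarrow> 'u::finite set"
    and Act :: "'c \<Rightarrow> 's \<Rightarrow> 'a set"
    and phi :: "'c \<Rightarrow> 's \<Rightarrow> 'a \<Rightarrow> 's \<Rightarrow> real"
    and pol :: "'c \<Rightarrow> 'u \<Rightarrow> 's \<Rightarrow> 'a"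
    and m :: "'c \<Rightarrow> real"
    and kappa :: "'c \<Rightarrow> real"
    and F :: "('c,'s,'u) pstate \<Rightarrow> real^'u^'c"
    and rho :: "'c \<Rightarrow> real^'u \<Rightarrow> real^'u \<Rightarrow> 'u \<Rightarrow> 'u \<Rightarrow> real"
    and MF :: "(real^'u^'c) set"
    and Dbar :: "(real^'u^'c) set"
    and V :: "real^'u^'c \<Rightarrow> real"
    and V' :: "real^'u^'c \<Rightarrow> real^'u^'c"
  defines "et \<equiv> eta Sset Act phi pol"
  defines "X \<equiv> Xset Sset Pset m"
  defines "D \<equiv> Dx Pset m"
  defines "FF \<equiv> (\<lambda>x. F (BSK Sset Pset et x))"
  defines "M \<equiv> BSK Sset Pset et ` MF"
  (* model primitives *)
  assumes S_ne: "\<And>c. Sset c \<noteq> {}"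
    and P_ne: "\<And>c. Pset c \<noteq> {}"
    and Act_fin: "\<And>c s. s \<in> Sset c \<Longrightarrow> finite (Act c s) \<and> Act c s \<noteq> {}"
    and phi_nonneg: "\<And>c s a s'. s \<in> Sset c \<Longrightarrow> a \<in> Act c s \<Longrightarrow> s' \<in> Sset c \<Longrightarrow> phi c s a s' \<ge> 0"
    and phi_sum: "\<And>c s a. s \<in> Sset c \<Longrightarrow> a \<in> Act c s \<Longrightarrow> (\<Sum>s'\<in>Sset c. phi c s a s') = 1"
    and pol_act: "\<And>c u s. u \<in> Pset c \<Longrightarrow> s \<in> Sset c \<Longrightarrow> pol c u s \<in> Act c s"
    and m_pos: "\<And>c. m c > 0"
    and kappa_ge: "\<And>c. kappa c \<ge> 1"
    and kappa_min: "\<exists>c. kappa c = 1"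
    (* standing assumption: unique recurrent communicating class, hence unique stationary distribution *)
    and unique_rec: "\<And>c u. u \<in> Pset c \<Longrightarrow> \<exists>!K. recurrent_class Sset Act phi pol c u K"
    and unique_stat: "\<And>c u. u \<in> Pset c \<Longrightarrow> \<exists>!\<eta>. stationary Sset Act phi pol c u \<eta>"
    (* payoff: C^1 on an open neighbourhood of X *)
    and F_C1: "\<exists>U F'. open U \<and> X \<subseteq> U \<and> (\<forall>\<mu>\<in>U. (F has_derivative blinfun_apply (F' \<mu>)) (at \<mu>))
                 \<and> continuous_on U F'"
    (* revision protocols: nonnegative and Lipschitz on R^{n^c} x R^{n^c}_{>=0} *)
    and rho_nonneg: "\<And>c p y u v. (\<forall>w. w \<notin> Pset c \<longrightarrow> p$w = 0 \<and> y$w = 0) \<Longrightarrow> (\<forall>w. y$w \<ge> 0)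
                 \<Longrightarrow> u \<in> Pset c \<Longrightarrow> v \<in> Pset c \<Longrightarrow> rho c p y u v \<ge> 0"
    and rho_lip: "\<exists>L. \<forall>c p y q z u v. (\<forall>w. w \<notin> Pset c \<longrightarrow> p$w = 0 \<and> y$w = 0 \<and> q$w = 0 \<and> z$w = 0)
                 \<longrightarrow> (\<forall>w. y$w \<ge> 0 \<and> z$w \<ge> 0) \<longrightarrow> u \<in> Pset c \<longrightarrow> v \<in> Pset c
                 \<longrightarrow> \<bar>rho c p y u v - rho c q z u v\<bar> \<le> L * (norm (p - q) + norm (y - z))"
    (* the target set *)
    and MF_ne: "MF \<noteq> {}"
    and MF_closed: "closed MF"
    and MF_NE: "MF \<subseteq> NEset Pset m FF"
    (* Lyapunov function *)
    and Dbar_sub: "Dbar \<subseteq> D"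
    and Dbar_nbhd: "\<exists>W. open W \<and> MF \<subseteq> W \<and> W \<inter> D \<subseteq> Dbar"
    and V_deriv: "\<And>x. x \<in> Dbar \<Longrightarrow> (V has_derivative (\<lambda>h. V' x \<bullet> h)) (at x within Dbar)"
    and V'_cont: "continuous_on Dbar V'"
    and V'_bdd: "bounded (V' ` Dbar)"
    and V_nonneg: "\<And>x. x \<in> Dbar \<Longrightarrow> V x \<ge> 0"
    and V_pos: "\<And>x. x \<in> Dbar - MF \<Longrightarrow> V x > 0"
    and V_zero: "\<And>x. x \<in> MF \<Longrightarrow> V x = 0"
    and V_dec: "\<And>x. x \<in> Dbar - MF \<Longrightarrow> V' x \<bullet> gred Pset rho FF x < 0"
    and V_dec0: "\<And>x. x \<in> MF \<Longrightarrow> V' x \<bullet> gred Pset rho FF x = 0"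
  shows "(\<forall>B>0. \<exists>\<epsilon>s>0. \<exists>B0>0. \<exists>T>0. \<forall>\<epsilon>. 0 < \<epsilon> \<and> \<epsilon> < \<epsilon>s \<longrightarrow>
            (\<forall>\<mu>. is_solution Sset Pset m Act phi pol rho F kappa \<epsilon> \<mu> \<longrightarrow>
               infdist (\<mu> 0) M \<le> B0 \<longrightarrow> (\<forall>t\<ge>T. infdist (\<mu> t) M \<le> B)))
       \<and> (Dbar = D \<longrightarrow>
           (\<forall>B>0. \<forall>\<mu>0\<in>X. \<exists>\<epsilon>s>0. \<exists>T>0. \<forall>\<epsilon>. 0 < \<epsilon> \<and> \<epsilon> < \<epsilon>s \<longrightarrow>
            (\<forall>\<mu>. is_solution Sset Pset m Act phi pol rho F kappa \<epsilon> \<mu> \<longrightarrow> \<mu> 0 = \<mu>0 \<longrightarrow>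
               (\<forall>t\<ge>T. infdist (\<mu> t) M \<le> B))))"
proof -
  have "\<And>c s. s \<in> Sset c \<Longrightarrow> finite (Act c s)" using Act_fin by blast
  moreover have "MF \<subseteq> Dx Pset m" using MF_NE unfolding NEset_def by auto
  ultimately have model: "lyapunov_model Sset Pset Act phi pol m kappa F rho MF Dbar V V'"
    using phi_nonneg phi_sum pol_act m_pos kappa_ge unique_rec unique_stat F_C1 rho_lip MF_ne MF_closed
      Dbar_sub Dbar_nbhd V_deriv V'_cont V'_bdd V_nonneg V_pos V_zero V_dec
    unfolding assms(1-5) by unfold_locales
  have "\<exists>\<epsilon>s>0. \<exists>T>0. \<forall>\<epsilon>. 0 < \<epsilon> \<and> \<epsilon> < \<epsilon>s \<longrightarrow>
      (\<forall>\<mu>. is_solution Sset Pset m Act phi pol rho F kappa \<epsilon> \<mu> \<longrightarrow> \<mu> 0 = \<mu>0 \<longrightarrow> (\<forall>t\<ge>T. infdist (\<mu> t) M \<le> B))"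
    if Dbar: "Dbar = D" and B: "0 < B" for B \<mu>0
  proof -
    obtain \<epsilon>s T where "0 < \<epsilon>s" "0 < T" and attracted: "\<forall>\<epsilon>. 0 < \<epsilon> \<and> \<epsilon> < \<epsilon>s \<longrightarrow>
        (\<forall>\<mu>. is_solution Sset Pset m Act phi pol rho F kappa \<epsilon> \<mu> \<longrightarrow> (\<forall>t\<ge>T. infdist (\<mu> t) M \<le> B))"
      using lyapunov_model.attracted_near_M[OF model] Dbar B unfolding assms(1,3,5) by blast
    then show ?thesis by (intro exI[of _ \<epsilon>s] conjI exI[of _ T]) auto
  qed
  then show ?thesis using lyapunov_model.stable_near_M[OF model] unfolding assms(1,5) by blast
qed

end
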